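(* Let $0 \le r \le n/2$ be an integer, let $B = B(n,r) = \bigcup_{i=0}^r S(n,i)$ be the Hamming ball of radius $r$ around $0$ in $\{0,1\}^n$, and let $A$ be the adjacency matrix of the subgraph of the Hamming cube induced by $B$ (two vertices adjacent iff their Hamming distance is $1$). For $0 \le t \le r$ let $\Lambda_t = \{2x - (n-2t) : x \in \mathcal{R}(n-2t, r-t+1)\}$. Then: (1) For each $t = 0,\dots,r$ and each of the $r-t+1$ distinct real numbers $\lambda \in \Lambda_t$, the matrix $A$ has an eigenspace $W_t(\lambda)$ (a subspace of eigenvectors of $A$ with eigenvalue $\lambda$) of dimension $\binom{n}{t} - \binom{n}{t-1}$. (2) A real number $\lambda$ is an eigenvalue of $A$ if and only if $\lambda \in \bigcup_{t=0}^r \Lambda_t$, and its multiplicity as an eigenvalue of $A$ is $m(\lambda) = \sum_{t : \lambda \in \Lambda_t} \left(\binom{n}{t} - \binom{n}{t-1}\right)$, where $\binom{n}{-1} := 0$. (3) Let $f \in W_t(\lambda)$. Then $f$ vanishes on $B(n,t-1) = \bigcup_{i=0}^{t-1} S(n,i)$, and for each $t \le i \le r$ the restriction of $f$ to $S(n,i)$ lies in the $t$-th eigenspace $V_t$ of $S(n,i)$. The restrictions of functions in $W_t(\lambda)$ to $S(n,t)$ span the $t$-th eigenspace $V_t$ of $S(n,t)$, and a function $f \in W_t(\lambda)$ is determined by its restriction to $S(n,t)$.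
   Context: $\{0,1\}^n$ is the Hamming cube with Hamming distance $|x-y|=|\{k: x_k\ne y_k\}|$ and weight $|x|$; points are identified with subsets of $\{1,\dots,n\}$. $S(n,i) = \{x : |x| = i\}$, with inner product $\langle f,g\rangle=\sum_{x\in S(n,i)}f(x)g(x)$ on functions. For $|z|\le i$, $g_z$ is the function on $S(n,i)$ equal to $1$ at $x$ if $z\subseteq x$ and $0$ otherwise; $U_j=\mathrm{span}\{g_z:|z|\le j\}$; the eigenspaces of $S(n,i)$ are $V_0=U_0$ (constants) and $V_j=U_j\cap U_{j-1}^\perp$, $1\le j\le i$. The Krawtchouk polynomial on $\{0,1\}^m$ of degree $k$ is $K^{(m)}_k(x) = \sum_{\ell=0}^k (-1)^\ell \binom{x}{\ell}\binom{m-x}{k-\ell}$ (a polynomial in $x$); its roots are real, distinct and lie in $(0,m)$, and $\mathcal{R}(m,k)$ denotes the set of roots of $K^{(m)}_k$. *)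

theory Defs
  imports "HOL-Analysis.Analysis" "HOL-Library.Function_Algebras"
begin

definition fscale :: "real \<Rightarrow> ('a \<Rightarrow> real) \<Rightarrow> ('a \<Rightarrow> real)" where
  "fscale c f = (\<lambda>x. c * f x)"

interpretation fvs: vector_space "fscale :: real \<Rightarrow> ('a \<Rightarrow> real) \<Rightarrow> ('a \<Rightarrow> real)"
  by unfold_locales (auto simp: fscale_def fun_eq_iff algebra_simps)

section \<open>The Hamming cube (points = subsets of {1..n})\<close>

definition sphere_layer :: "nat \<Rightarrow> nat \<Rightarrow> nat set set" where
  "sphere_layer n i = {x. x \<subseteq> {1..n} \<and> card x = i}"

definition hball :: "nat \<Rightarrow> nat \<Rightarrow> nat set set" where
  "hball n r = (\<Union>i\<in>{0..r}. sphere_layer n i)"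

definition hdist :: "nat set \<Rightarrow> nat set \<Rightarrow> nat" where
  "hdist x y = card ((x - y) \<union> (y - x))"

definition funs_on :: "nat set set \<Rightarrow> (nat set \<Rightarrow> real) set" where
  "funs_on X = {f. \<forall>x. x \<notin> X \<longrightarrow> f x = 0}"

definition restr :: "nat set set \<Rightarrow> (nat set \<Rightarrow> real) \<Rightarrow> (nat set \<Rightarrow> real)" where
  "restr X f = (\<lambda>x. if x \<in> X then f x else 0)"

definition adj_op :: "nat \<Rightarrow> nat \<Rightarrow> (nat set \<Rightarrow> real) \<Rightarrow> (nat set \<Rightarrow> real)" where
  "adj_op n r f = (\<lambda>x. if x \<in> hball n r
      then (\<Sum>y\<in>{y\<in>hball n r. hdist x y = 1}. f y) else 0)"

definition adj_eigenspace :: "nat \<Rightarrow> nat \<Rightarrow> real \<Rightarrow> (nat set \<Rightarrow> real) set" where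
  "adj_eigenspace n r mu = {f \<in> funs_on (hball n r). adj_op n r f = fscale mu f}"

definition is_adj_eigenvalue :: "nat \<Rightarrow> nat \<Rightarrow> real \<Rightarrow> bool" where
  "is_adj_eigenvalue n r mu \<longleftrightarrow> (\<exists>f \<in> adj_eigenspace n r mu. f \<noteq> 0)"

section \<open>Eigenspaces V_j of the Johnson scheme S(n,i)\<close>

definition gz :: "nat \<Rightarrow> nat \<Rightarrow> nat set \<Rightarrow> (nat set \<Rightarrow> real)" where
  "gz n i z = (\<lambda>x. if x \<in> sphere_layer n i \<and> z \<subseteq> x then 1 else 0)"

definition U_sp :: "nat \<Rightarrow> nat \<Rightarrow> nat \<Rightarrow> (nat set \<Rightarrow> real) set" where
  "U_sp n i j = fvs.span {gz n i z | z. z \<subseteq> {1..n} \<and> card z \<le> j}"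

definition layer_inner :: "nat \<Rightarrow> nat \<Rightarrow> (nat set \<Rightarrow> real) \<Rightarrow> (nat set \<Rightarrow> real) \<Rightarrow> real" where
  "layer_inner n i f g = (\<Sum>x\<in>sphere_layer n i. f x * g x)"

definition V_sp :: "nat \<Rightarrow> nat \<Rightarrow> nat \<Rightarrow> (nat set \<Rightarrow> real) set" where
  "V_sp n i j = (if j = 0 then U_sp n i 0
     else {f \<in> U_sp n i j. \<forall>g \<in> U_sp n i (j - 1). layer_inner n i f g = 0})"

definition krawtchouk :: "nat \<Rightarrow> nat \<Rightarrow> real \<Rightarrow> real" where
  "krawtchouk m k x = (\<Sum>l=0..k. (-1)^l * (x gchoose l) * ((real m - x) gchoose (k - l)))"

definition kraw_roots :: "nat \<Rightarrow> nat \<Rightarrow> real set" where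
  "kraw_roots m k = {x. krawtchouk m k x = 0}"

definition Lambda :: "nat \<Rightarrow> nat \<Rightarrow> nat \<Rightarrow> real set" where
  "Lambda n r t = {2 * x - (real n - 2 * real t) | x. x \<in> kraw_roots (n - 2 * t) (r - t + 1)}"

definition bdiff :: "nat \<Rightarrow> nat \<Rightarrow> int" where
  "bdiff n t = int (n choose t) - (if t = 0 then 0 else int (n choose (t - 1)))"

end

(*
  For a function h on S(n,t) killed by the down operator (these are exactly the functions in V_t
  of S(n,t)), put F(y) = c_{|y|-t} * sum {h x | x \<subseteq> y, |x| = t} on B(n,r). Applying A and
  counting the t-subsets that survive deleting or adding a coordinate shows that F is an
  eigenvector with eigenvalue mu iff the c_k satisfy a three-term recurrence which stops at
  k = r - t. After rescaling, this recurrence is the one of the Krawtchouk polynomials, so it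
  closes up exactly when mu is one of the r - t + 1 real roots collected in Lambda_t; distinctness
  of these roots is the interlacing property of three-term recurrences.

  The resulting eigen families W_t(mu) are mutually orthogonal: for different t by a double
  counting between consecutive layers, for different mu because A is symmetric. By rank-nullity
  each space of such h has dimension at least binom(n,t) - binom(n,t-1), and the weighted sum of
  these lower bounds over all pairs (t, mu) is already |B(n,r)|. Hence all bounds are equalities,
  and the eigen families fill the whole space, which also determines every eigenspace of A.
*)

theory Submission
  imports Defs
begin

section \<open>Krawtchouk polynomials and their real roots\<close>

(* The Krawtchouk recurrence rescaled: with N = M, kraw_poly N k is k! K^(M)_k written as a
   polynomial in M - 2x (fact_krawtchouk_eq_kraw_poly). *)

fun kraw_poly :: "real \<Rightarrow> nat \<Rightarrow> real poly" where
  "kraw_poly N 0 = 1"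
| "kraw_poly N (Suc 0) = [:0, 1:]"
| "kraw_poly N (Suc (Suc k)) =
     [:0, 1:] * kraw_poly N (Suc k) - smult (real (Suc k) * (N - real k)) (kraw_poly N k)"

lemma poly_kraw_poly_Suc:
  "poly (kraw_poly N (Suc k)) x =
     x * poly (kraw_poly N k) x - (if k = 0 then 0 else real k * (N - real k + 1) * poly (kraw_poly N (k - 1)) x)"
  by (cases k) (auto simp: algebra_simps)

lemma poly_kraw_poly_minus: "poly (kraw_poly N k) (- x) = (-1) ^ k * poly (kraw_poly N k) x"
  by (induction N k rule: kraw_poly.induct) (auto simp: algebra_simps)

lemma degree_kraw_poly_le_and_coeff: "degree (kraw_poly N k) \<le> k \<and> coeff (kraw_poly N k) k = 1"
proof (induction N k rule: kraw_poly.induct)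
  case (3 N k)
  have "degree ([:0, 1:] * kraw_poly N (Suc k)) \<le> Suc (Suc k)"
    using degree_mult_le[of "[:0, 1:]" "kraw_poly N (Suc k)"] 3 by simp
  moreover have "degree (smult (real (Suc k) * (N - real k)) (kraw_poly N k)) \<le> Suc (Suc k)"
    using 3 degree_smult_le[of "real (Suc k) * (N - real k)" "kraw_poly N k"] by linarith
  moreover have "coeff (kraw_poly N k) (Suc (Suc k)) = 0"
    using 3 by (simp add: coeff_eq_0)
  ultimately show ?case
    using 3 by (simp add: degree_diff_le mult_pCons_left)
qed auto

lemma degree_kraw_poly [simp]: "degree (kraw_poly N k) = k"
  by (metis degree_kraw_poly_le_and_coeff le_antisym le_degree one_neq_zero)

lemma coeff_kraw_poly_degree [simp]: "coeff (kraw_poly N k) k = 1"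
  using degree_kraw_poly_le_and_coeff[of N k] by simp

lemma kraw_poly_nonzero [simp]: "kraw_poly N k \<noteq> 0"
  using coeff_kraw_poly_degree[of N k] by (metis coeff_0 zero_neq_one)

definition root_gap :: "(nat \<Rightarrow> real) \<Rightarrow> nat \<Rightarrow> nat \<Rightarrow> real set" where
  "root_gap xs m j = {y. (j = 0 \<or> xs (j - 1) < y) \<and> (j = m \<or> y < xs j)}"

definition alternating_roots :: "real poly \<Rightarrow> nat \<Rightarrow> (nat \<Rightarrow> real) \<Rightarrow> bool" where
  "alternating_roots p m xs \<longleftrightarrow> strict_mono_on {..<m} xs \<and> (\<forall>j<m. poly p (xs j) = 0) \<and>
     (\<forall>j\<le>m. \<forall>y\<in>root_gap xs m j. (-1) ^ (m - j) * poly p y > 0)"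

lemma root_gap_convex:
  "y \<in> root_gap xs m j \<Longrightarrow> z \<in> root_gap xs m j \<Longrightarrow> min y z \<le> x \<Longrightarrow> x \<le> max y z
     \<Longrightarrow> x \<in> root_gap xs m j"
  unfolding root_gap_def by auto

lemma root_gap_not_root:
  assumes mono: "strict_mono_on {..<m} xs" and y: "y \<in> root_gap xs m j" and "j \<le> m" "i < m"
  shows "y \<noteq> xs i"
proof (cases "i < j")
  case True
  have "xs i \<le> xs (j - 1)"
  proof (cases "i = j - 1")
    case False
    then show ?thesis using True assms by (intro less_imp_le strict_mono_onD[OF mono]) auto
  qed simp
  then show ?thesis using y True unfolding root_gap_def by auto
next
  case False
  have "xs j \<le> xs i"
  proof (cases "i = j")
    case False
    then show ?thesis using \<open>\<not> i < j\<close> assms by (intro less_imp_le strict_mono_onD[OF mono]) auto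
  qed simp
  then show ?thesis using y assms False unfolding root_gap_def by auto
qed

lemma alternating_roots_eq:
  assumes "alternating_roots p m xs"
  shows "{x. poly p x = 0} = xs ` {..<m}"
proof (intro equalityI subsetI)
  fix x assume root: "x \<in> {x. poly p x = 0}"
  show "x \<in> xs ` {..<m}"
  proof (rule ccontr)
    assume x: "x \<notin> xs ` {..<m}"
    define j where "j = (LEAST j. j = m \<or> x < xs j)"
    have "j = m \<or> x < xs j"
      unfolding j_def by (rule LeastI[of _ m]) simp
    moreover have "j \<le> m"
      unfolding j_def by (rule Least_le) simp
    moreover have "xs (j - 1) < x" if "j \<noteq> 0"
    proof -
      have "\<not> (j - 1 = m \<or> x < xs (j - 1))"
        using that unfolding j_def by (metis (mono_tags, lifting) diff_less not_less_Least zero_less_one neq0_conv j_def)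
      moreover have "j - 1 < m" using \<open>j \<le> m\<close> that by simp
      ultimately show ?thesis using x by force
    qed
    ultimately have "x \<in> root_gap xs m j" unfolding root_gap_def by blast
    then show False
      using assms root \<open>j \<le> m\<close> unfolding alternating_roots_def by force
  qed
qed (use assms in \<open>auto simp: alternating_roots_def\<close>)

lemma card_roots_alternating:
  assumes "alternating_roots p m xs"
  shows "card {x. poly p x = 0} = m"
proof -
  have "inj_on xs {..<m}"
    using assms strict_mono_on_imp_inj_on unfolding alternating_roots_def by blast
  then show ?thesis using alternating_roots_eq[OF assms] by (simp add: card_image)
qed

lemma poly_mult_pos_if_no_root_between:
  fixes p :: "real poly"
  assumes no_root: "\<And>x. min a b \<le> x \<Longrightarrow> x \<le> max a b \<Longrightarrow> poly p x \<noteq> 0"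
  shows "poly p a * poly p b > 0"
proof (rule ccontr)
  assume "\<not> ?thesis"
  moreover have "poly p a \<noteq> 0" "poly p b \<noteq> 0" using no_root by auto
  ultimately have "poly p a * poly p b < 0"
    by (metis linorder_neqE_linordered_idom mult_eq_0_iff)
  then have neg: "poly p (min a b) * poly p (max a b) < 0"
    by (cases "a \<le> b") (auto simp: min_def max_def mult.commute)
  have "a \<noteq> b"
    using \<open>poly p a * poly p b < 0\<close> not_square_less_zero by metis
  then have "min a b < max a b" by (simp add: min_def max_def)
  then obtain x where "min a b < x" "x < max a b" "poly p x = 0"
    using poly_IVT[OF _ neg] by blast
  then show False using no_root by force
qed

lemma strict_mono_on_atMostI:
  fixes f :: "nat \<Rightarrow> 'a :: order"
  assumes "\<And>j. j < m \<Longrightarrow> f j < f (Suc j)"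
  shows "strict_mono_on {..m} f"
proof (rule strict_mono_onI)
  fix i i' :: nat assume "i \<in> {..m}" "i' \<in> {..m}" "i < i'"
  then show "f i < f i'"
  proof (induction i' rule: less_induct)
    case (less i')
    then obtain j where j: "i' = Suc j" by (cases i') auto
    then have "f j < f i'" using assms less.prems by simp
    then show ?case using less j by (cases "i = j") force+
  qed
qed

lemma roots_between_alternating_values:
  fixes p :: "real poly" and a :: "nat \<Rightarrow> real"
  assumes a_mono: "\<And>j. j < m \<Longrightarrow> a j < a (Suc j)"
    and a_sign: "\<And>j. j \<le> m \<Longrightarrow> (-1) ^ (m - j) * poly p (a j) > 0"
  obtains ys where "strict_mono_on {..<m} ys"
    "\<And>j. j < m \<Longrightarrow> a j < ys j \<and> ys j < a (Suc j) \<and> poly p (ys j) = 0"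
proof -
  have "\<exists>y. a j < y \<and> y < a (Suc j) \<and> poly p y = 0" if "j < m" for j
  proof -
    have "m - j = Suc (m - Suc j)" using that by simp
    then have "(-1::real) ^ (m - j) = - ((-1) ^ (m - Suc j))" by simp
    then have "poly p (a j) * poly p (a (Suc j)) < 0"
      using a_sign[of j] a_sign[of "Suc j"] that
      by (cases "even (m - Suc j)") (auto simp: mult_less_0_iff)
    then show ?thesis using poly_IVT[OF a_mono[OF that]] by blast
  qed
  then obtain ys where ys: "\<And>j. j < m \<Longrightarrow> a j < ys j \<and> ys j < a (Suc j) \<and> poly p (ys j) = 0"
    by metis
  have a_strict: "strict_mono_on {..m} a"
    by (rule strict_mono_on_atMostI) (rule a_mono)
  have "strict_mono_on {..<m} ys"
  proof (rule strict_mono_onI)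
    fix i i' assume i: "i \<in> {..<m}" "i' \<in> {..<m}" "i < i'"
    have "a (Suc i) \<le> a i'"
    proof (cases "Suc i = i'")
      case False
      then show ?thesis using i by (intro less_imp_le strict_mono_onD[OF a_strict]) auto
    qed simp
    then show "ys i < ys i'" using ys[of i] ys[of i'] i by fastforce
  qed
  then show ?thesis using that ys by blast
qed

lemma alternating_values_give_roots:
  fixes p :: "real poly" and a :: "nat \<Rightarrow> real"
  assumes "p \<noteq> 0" "degree p \<le> m"
    and a_mono: "\<And>j. j < m \<Longrightarrow> a j < a (Suc j)"
    and a_sign: "\<And>j. j \<le> m \<Longrightarrow> (-1) ^ (m - j) * poly p (a j) > 0"
  obtains ys where "alternating_roots p m ys" "\<And>j. j < m \<Longrightarrow> a j < ys j \<and> ys j < a (Suc j)"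
proof -
  obtain ys where ys_mono: "strict_mono_on {..<m} ys"
    and ys: "\<And>j. j < m \<Longrightarrow> a j < ys j \<and> ys j < a (Suc j) \<and> poly p (ys j) = 0"
    using roots_between_alternating_values[OF a_mono a_sign] by blast
  have roots: "{x. poly p x = 0} = ys ` {..<m}"
  proof -
    have fin: "finite {x. poly p x = 0}" using poly_roots_finite[OF assms(1)] .
    have sub: "ys ` {..<m} \<subseteq> {x. poly p x = 0}" using ys by auto
    have "card (ys ` {..<m}) = m"
      using strict_mono_on_imp_inj_on[OF ys_mono] by (simp add: card_image)
    moreover have "card {x. poly p x = 0} \<le> m"
      using card_poly_roots_bound[OF assms(1)] assms(2) by linarith
    ultimately have "card (ys ` {..<m}) = card {x. poly p x = 0}"
      using card_mono[OF fin sub] by linarith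
    then show ?thesis using card_subset_eq[OF fin sub] by simp
  qed
  have "(-1) ^ (m - j) * poly p y > 0" if j: "j \<le> m" and y: "y \<in> root_gap ys m j" for j y
  proof -
    have aj: "a j \<in> root_gap ys m j"
      using ys[of "j - 1"] ys[of j] j unfolding root_gap_def by (cases j) force+
    have "poly p (a j) * poly p y > 0"
    proof (rule poly_mult_pos_if_no_root_between)
      fix x assume "min (a j) y \<le> x" "x \<le> max (a j) y"
      then have "x \<in> root_gap ys m j" using root_gap_convex[OF aj y] by blast
      then show "poly p x \<noteq> 0" using roots root_gap_not_root[OF ys_mono _ j] by auto
    qed
    then show ?thesis using a_sign[OF j] by (auto simp: zero_less_mult_iff)
  qed
  then show ?thesis
    using that ys ys_mono unfolding alternating_roots_def by blast
qed

lemma kraw_poly_large_values: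
  obtains M where "\<And>x. x \<ge> M \<Longrightarrow> poly (kraw_poly N k) x \<ge> 1"
    "\<And>x. x \<ge> M \<Longrightarrow> (-1) ^ k * poly (kraw_poly N k) (- x) \<ge> 1"
proof -
  obtain M where M: "\<And>x. x \<ge> M \<Longrightarrow> poly (kraw_poly N k) x \<ge> 1"
    using poly_pinfty_gt_lc[of "kraw_poly N k"] by auto
  have "(-1) ^ k * poly (kraw_poly N k) (- x) = poly (kraw_poly N k) x" for x
    by (simp add: poly_kraw_poly_minus)
  then show ?thesis using M by (intro that[of M]) simp_all
qed

lemma kraw_poly_Suc_sign_at_roots:
  assumes "poly (kraw_poly N k) x = 0" "j < k"
    and "(-1) ^ (k - 1 - j) * poly (kraw_poly N (k - 1)) x > 0" and "real k * (N - real k + 1) > 0"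
  shows "(-1) ^ (k - j) * poly (kraw_poly N (Suc k)) x > 0"
proof -
  have "k - j = Suc (k - 1 - j)" using assms(2) by simp
  then have "(-1) ^ (k - j) * poly (kraw_poly N (Suc k)) x
      = real k * (N - real k + 1) * ((-1) ^ (k - 1 - j) * poly (kraw_poly N (k - 1)) x)"
    using poly_kraw_poly_Suc[of N k x] assms(1,2) by simp
  then show ?thesis using assms(3,4) by simp
qed

lemma kraw_poly_interlacing_step:
  assumes xs: "alternating_roots (kraw_poly N k) k xs"
    and prev: "\<And>j. j < k \<Longrightarrow> (-1) ^ (k - 1 - j) * poly (kraw_poly N (k - 1)) (xs j) > 0"
    and "k \<ge> 1" and b: "real k * (N - real k + 1) > 0"
  obtains ys where "alternating_roots (kraw_poly N (Suc k)) (Suc k) ys"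
    "\<And>j. j < Suc k \<Longrightarrow> (-1) ^ (k - j) * poly (kraw_poly N k) (ys j) > 0"
proof -
  let ?Q = "kraw_poly N (Suc k)"
  obtain M where M: "\<And>x. x \<ge> M \<Longrightarrow> poly ?Q x \<ge> 1"
    "\<And>x. x \<ge> M \<Longrightarrow> (-1) ^ Suc k * poly ?Q (- x) \<ge> 1"
    using kraw_poly_large_values[of N "Suc k"] by blast
  define a where "a j = (if j = 0 then - max M (1 - xs 0) else if j \<le> k then xs (j - 1)
    else max M (xs (k - 1) + 1))" for j
  have a_mono: "a j < a (Suc j)" if j: "j < Suc k" for j
  proof -
    consider "j = 0" | "0 < j" "j < k" | "j = k" "0 < k"
      using j \<open>k \<ge> 1\<close> by (cases "j = 0"; cases "j < k") auto
    then show ?thesis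
    proof cases
      case 2
      then show ?thesis using xs unfolding alternating_roots_def a_def
        by (auto intro: strict_mono_onD)
    qed (use \<open>k \<ge> 1\<close> in \<open>auto simp: a_def\<close>)
  qed
  have a_sign: "(-1) ^ (Suc k - j) * poly ?Q (a j) > 0" if j: "j \<le> Suc k" for j
  proof -
    consider "j = 0" | "0 < j" "j \<le> k" | "j = Suc k"
      using j by (cases "j = 0"; cases "j \<le> k") auto
    then show ?thesis
    proof cases
      case 1
      then show ?thesis using M(2)[of "max M (1 - xs 0)"] by (simp add: a_def)
    next
      case 2
      then show ?thesis
        using xs prev[of "j - 1"] kraw_poly_Suc_sign_at_roots[OF _ _ _ b, of "xs (j - 1)" "j - 1"]
        by (simp add: a_def alternating_roots_def)
    next
      case 3
      then show ?thesis using M(1)[of "max M (xs (k - 1) + 1)"] by (simp add: a_def)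
    qed
  qed
  obtain ys where ys: "alternating_roots ?Q (Suc k) ys"
    and between: "\<And>j. j < Suc k \<Longrightarrow> a j < ys j \<and> ys j < a (Suc j)"
    using alternating_values_give_roots[of ?Q "Suc k" a] a_mono a_sign by auto
  have "(-1) ^ (k - j) * poly (kraw_poly N k) (ys j) > 0" if "j < Suc k" for j
  proof -
    have "ys j \<in> root_gap xs k j"
      using between[OF that] that unfolding root_gap_def a_def by (auto split: if_splits)
    then show ?thesis using xs that unfolding alternating_roots_def by simp
  qed
  then show ?thesis using that ys by blast
qed

lemma kraw_poly_alternating_roots:
  assumes "\<And>j. 1 \<le> j \<Longrightarrow> j < k \<Longrightarrow> real j * (N - real j + 1) > 0" and "1 \<le> k"
  shows "\<exists>xs. alternating_roots (kraw_poly N k) k xs \<and>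
    (\<forall>j<k. (-1) ^ (k - 1 - j) * poly (kraw_poly N (k - 1)) (xs j) > 0)"
  using assms
proof (induction k)
  case (Suc k)
  show ?case
  proof (cases "k = 0")
    case True
    have "alternating_roots (kraw_poly N 1) 1 (\<lambda>_. 0)"
      by (auto simp: alternating_roots_def root_gap_def strict_mono_on_def)
    then show ?thesis using True by auto
  next
    case False
    then have k: "1 \<le> k" "real k * (N - real k + 1) > 0" using Suc.prems(1)[of k] by auto
    obtain xs where "alternating_roots (kraw_poly N k) k xs"
      "\<And>j. j < k \<Longrightarrow> (-1) ^ (k - 1 - j) * poly (kraw_poly N (k - 1)) (xs j) > 0"
      using Suc k by auto
    from kraw_poly_interlacing_step[OF this k] show ?thesis by auto
  qed
qed simp

lemma card_roots_kraw_poly: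
  assumes "\<And>j. 1 \<le> j \<Longrightarrow> j < k \<Longrightarrow> real j * (N - real j + 1) > 0"
  shows "card {x. poly (kraw_poly N k) x = 0} = k"
proof (cases "k = 0")
  case False
  then have "1 \<le> k" by simp
  then obtain xs where "alternating_roots (kraw_poly N k) k xs"
    using kraw_poly_alternating_roots[of k N, OF assms] by blast
  then show ?thesis by (rule card_roots_alternating)
qed simp

(* (1 - X)^x, and the generating function (1 - X)^x (1 + X)^(M - x) of the K^(M)_k(x). *)
definition fps_binomial_minus :: "real \<Rightarrow> real fps" where
  "fps_binomial_minus x = Abs_fps (\<lambda>l. (-1) ^ l * (x gchoose l))"

definition kraw_gf :: "nat \<Rightarrow> real \<Rightarrow> real fps" where
  "kraw_gf M x = fps_binomial_minus x * fps_binomial (real M - x)"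

lemma kraw_gf_nth: "fps_nth (kraw_gf M x) k = krawtchouk M k x"
  unfolding kraw_gf_def fps_binomial_minus_def krawtchouk_def fps_mult_nth by simp

lemma gbinomial_Suc_mult: "real (Suc l) * (a gchoose Suc l) = (a - real l) * (a gchoose l)"
  using gbinomial_mult_1[of a l] by (simp add: algebra_simps)

lemma fps_binomial_minus_deriv:
  "(1 - fps_X) * fps_deriv (fps_binomial_minus x) = - fps_const x * fps_binomial_minus x"
proof (rule fps_ext)
  fix n
  show "fps_nth ((1 - fps_X) * fps_deriv (fps_binomial_minus x)) n
      = fps_nth (- fps_const x * fps_binomial_minus x) n"
  proof (cases n)
    case (Suc m)
    have "fps_nth ((1 - fps_X) * fps_deriv (fps_binomial_minus x)) n
        = (-1) ^ Suc (Suc m) * (real (Suc (Suc m)) * (x gchoose Suc (Suc m)))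
          - real (Suc m) * ((-1) ^ Suc m * (x gchoose Suc m))"
      using Suc by (simp add: fps_binomial_minus_def algebra_simps)
    also have "\<dots> = - x * ((-1) ^ Suc m * (x gchoose Suc m))"
      unfolding gbinomial_Suc_mult by (simp add: algebra_simps)
    finally show ?thesis using Suc by (simp add: fps_binomial_minus_def)
  qed (simp add: fps_binomial_minus_def algebra_simps)
qed

lemma fps_binomial_deriv:
  "(1 + fps_X) * fps_deriv (fps_binomial y) = fps_const (y :: real) * fps_binomial y"
proof (rule fps_ext)
  fix n
  show "fps_nth ((1 + fps_X) * fps_deriv (fps_binomial y)) n = fps_nth (fps_const y * fps_binomial y) n"
  proof (cases n)
    case (Suc m)
    have "fps_nth ((1 + fps_X) * fps_deriv (fps_binomial y)) n
        = real (Suc (Suc m)) * (y gchoose Suc (Suc m)) + real (Suc m) * (y gchoose Suc m)"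
      using Suc by (simp add: algebra_simps)
    also have "\<dots> = y * (y gchoose Suc m)"
      unfolding gbinomial_Suc_mult[of "Suc m" y] by (simp add: algebra_simps)
    finally show ?thesis using Suc by simp
  qed (simp add: algebra_simps)
qed

lemma kraw_gf_deriv:
  "(1 - fps_X ^ 2) * fps_deriv (kraw_gf M x) =
     (fps_const (real M - 2 * x) - fps_const (real M) * fps_X) * kraw_gf M x"
proof -
  define A where "A = fps_binomial_minus x"
  define B where "B = fps_binomial (real M - x)"
  have "(1 - fps_X ^ 2) * fps_deriv (kraw_gf M x)
      = (1 + fps_X) * B * ((1 - fps_X) * fps_deriv A) + (1 - fps_X) * A * ((1 + fps_X) * fps_deriv B)"
    unfolding kraw_gf_def A_def[symmetric] B_def[symmetric]
    by (simp add: algebra_simps power2_eq_square)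
  also have "\<dots> = (1 + fps_X) * B * (- fps_const x * A) + (1 - fps_X) * A * (fps_const (real M - x) * B)"
    unfolding A_def B_def fps_binomial_minus_deriv fps_binomial_deriv ..
  also have "\<dots> = (fps_const (real M - x) - fps_const x - (fps_const x + fps_const (real M - x)) * fps_X)
      * (A * B)"
  proof -
    have "(1 + X) * B * (- cx * A) + (1 - X) * A * (cy * B) = (cy - cx - (cx + cy) * X) * (A * B)"
      for X A B cx cy :: "real fps"
      by (simp add: algebra_simps)
    then show ?thesis .
  qed
  also have "\<dots> = (fps_const (real M - 2 * x) - fps_const (real M) * fps_X) * kraw_gf M x"
  proof -
    have "fps_const (real M - x) - fps_const x = fps_const (real M - 2 * x)"
      "fps_const x + fps_const (real M - x) = fps_const (real M)"
      by simp_all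
    then show ?thesis unfolding kraw_gf_def A_def B_def by simp
  qed
  finally show ?thesis .
qed

lemma krawtchouk_rec:
  "real (Suc k) * krawtchouk M (Suc k) x = (real M - 2 * x) * krawtchouk M k x
     - (if k = 0 then 0 else (real M - real k + 1) * krawtchouk M (k - 1) x)"
proof -
  let ?G = "kraw_gf M x"
  have "fps_nth ((1 - fps_X ^ 2) * fps_deriv ?G) k
      = real (Suc k) * fps_nth ?G (Suc k) - (if k < 2 then 0 else real (k - 1) * fps_nth ?G (k - 1))"
  proof -
    have "fps_nth (fps_X ^ 2 * fps_deriv ?G) k = (if k < 2 then 0 else real (k - 1) * fps_nth ?G (k - 1))"
      unfolding fps_X_power_mult_nth by (cases k) (auto simp: Suc_diff_le of_nat_diff)
    then show ?thesis by (simp add: algebra_simps)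
  qed
  moreover have "fps_nth ((fps_const (real M - 2 * x) - fps_const (real M) * fps_X) * ?G) k
      = (real M - 2 * x) * fps_nth ?G k - (if k = 0 then 0 else real M * fps_nth ?G (k - 1))"
    by (simp add: algebra_simps mult.assoc)
  ultimately show ?thesis
    unfolding kraw_gf_deriv kraw_gf_nth by (cases "k < 2") (auto simp: algebra_simps of_nat_diff)
qed

lemma fact_krawtchouk_eq_kraw_poly:
  "fact k * krawtchouk M k x = poly (kraw_poly (real M) k) (real M - 2 * x)"
proof -
  have "fact k * krawtchouk M k x = poly (kraw_poly (real M) k) (real M - 2 * x) \<and>
        fact (Suc k) * krawtchouk M (Suc k) x = poly (kraw_poly (real M) (Suc k)) (real M - 2 * x)"
  proof (induction k)
    case 0
    then show ?case by (simp add: krawtchouk_def)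
  next
    case (Suc k)
    have "fact (Suc (Suc k)) * krawtchouk M (Suc (Suc k)) x
        = fact (Suc k) * (real (Suc (Suc k)) * krawtchouk M (Suc (Suc k)) x)"
      by (simp add: algebra_simps)
    also have "\<dots> = (real M - 2 * x) * (fact (Suc k) * krawtchouk M (Suc k) x)
        - real (Suc k) * (real M - real k) * (fact k * krawtchouk M k x)"
      unfolding krawtchouk_rec[of "Suc k"] by (simp add: algebra_simps)
    also have "\<dots> = poly (kraw_poly (real M) (Suc (Suc k))) (real M - 2 * x)"
      using Suc.IH by (simp add: algebra_simps)
    finally show ?case using Suc.IH by simp
  qed
  then show ?thesis ..
qed

lemma Lambda_eq_roots_kraw_poly:
  assumes "2 * r \<le> n" "t \<le> r"
  shows "Lambda n r t = {mu. poly (kraw_poly (real n - 2 * real t) (Suc (r - t))) mu = 0}"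
proof -
  let ?c = "real n - 2 * real t"
  let ?Q = "kraw_poly ?c (Suc (r - t))"
  have M: "real (n - 2 * t) = ?c" using assms by (simp add: of_nat_diff)
  have root_iff: "krawtchouk (n - 2 * t) (r - t + 1) x = 0 \<longleftrightarrow> poly ?Q (2 * x - ?c) = 0" for x
    using fact_krawtchouk_eq_kraw_poly[of "Suc (r - t)" "n - 2 * t" x]
      poly_kraw_poly_minus[of ?c "Suc (r - t)" "2 * x - ?c"]
    unfolding M by auto
  show ?thesis
  proof (intro set_eqI iffI)
    fix mu assume "mu \<in> {mu. poly ?Q mu = 0}"
    moreover have mu: "2 * ((mu + ?c) / 2) - ?c = mu" by (simp add: field_simps)
    ultimately have "krawtchouk (n - 2 * t) (r - t + 1) ((mu + ?c) / 2) = 0"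
      using root_iff[of "(mu + ?c) / 2"] by simp
    then show "mu \<in> Lambda n r t"
      unfolding Lambda_def kraw_roots_def using mu by force
  qed (use root_iff in \<open>auto simp: Lambda_def kraw_roots_def\<close>)
qed

lemma card_Lambda:
  assumes "2 * r \<le> n" "t \<le> r"
  shows "card (Lambda n r t) = r - t + 1"
proof -
  have "card {mu. poly (kraw_poly (real n - 2 * real t) (Suc (r - t))) mu = 0} = Suc (r - t)"
  proof (rule card_roots_kraw_poly)
    fix j assume "1 \<le> j" "j < Suc (r - t)"
    then show "real j * (real n - 2 * real t - real j + 1) > 0" using assms by simp
  qed
  then show ?thesis using Lambda_eq_roots_kraw_poly[OF assms] by simp
qed

section \<open>Sums over subsets and the layers of the cube\<close>

definition subset_sum :: "nat \<Rightarrow> (nat set \<Rightarrow> real) \<Rightarrow> nat set \<Rightarrow> real" where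
  "subset_sum t h y = (\<Sum>x | x \<subseteq> y \<and> card x = t. h x)"

lemma finite_subsets_card: "finite y \<Longrightarrow> finite {x. x \<subseteq> y \<and> card x = t}"
  by (rule finite_subset[of _ "Pow y"]) auto

lemma subset_sum_eq_0_if_card_less: "finite y \<Longrightarrow> card y < t \<Longrightarrow> subset_sum t h y = 0"
  unfolding subset_sum_def by (metis (mono_tags, lifting) card_mono leD mem_Collect_eq sum.neutral)

lemma subset_sum_card_self: "finite y \<Longrightarrow> subset_sum (card y) h y = h y"
proof -
  assume "finite y"
  then have "{x. x \<subseteq> y \<and> card x = card y} = {y}" using card_subset_eq by auto
  then show ?thesis unfolding subset_sum_def by simp
qed

lemma subset_sum_add: "subset_sum t (h1 + h2) y = subset_sum t h1 y + subset_sum t h2 y"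
  unfolding subset_sum_def by (simp add: sum.distrib)

lemma subset_sum_scale: "subset_sum t (\<lambda>x. c * h x) y = c * subset_sum t h y"
  unfolding subset_sum_def by (simp add: sum_distrib_left)

lemma sum_subset_sum_delete:
  assumes "finite y"
  shows "(\<Sum>a\<in>y. subset_sum t h (y - {a})) = real (card y - t) * subset_sum t h y"
proof -
  let ?P = "{x. x \<subseteq> y \<and> card x = t}"
  have "(\<Sum>a\<in>y. subset_sum t h (y - {a})) = (\<Sum>a\<in>y. \<Sum>x\<in>?P. if a \<notin> x then h x else 0)"
  proof (rule sum.cong[OF refl])
    fix a assume "a \<in> y"
    have "{x. x \<subseteq> y - {a} \<and> card x = t} = {x\<in>?P. a \<notin> x}" by auto
    then show "subset_sum t h (y - {a}) = (\<Sum>x\<in>?P. if a \<notin> x then h x else 0)"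
      unfolding subset_sum_def using sum.inter_filter[OF finite_subsets_card[OF assms]] by simp
  qed
  also have "\<dots> = (\<Sum>x\<in>?P. \<Sum>a\<in>y. if a \<notin> x then h x else 0)" by (rule sum.swap)
  also have "\<dots> = (\<Sum>x\<in>?P. real (card y - t) * h x)"
  proof (rule sum.cong[OF refl])
    fix x assume x: "x \<in> ?P"
    have "(\<Sum>a\<in>y. if a \<notin> x then h x else 0) = (\<Sum>a\<in>y - x. h x)"
      using sum.inter_filter[OF assms, of "\<lambda>_. h x" "\<lambda>a. a \<notin> x"] by (simp add: set_diff_eq)
    moreover have "card (y - x) = card y - t"
      using x assms by (metis (mono_tags, lifting) card_Diff_subset finite_subset mem_Collect_eq)
    ultimately show "(\<Sum>a\<in>y. if a \<notin> x then h x else 0) = real (card y - t) * h x" by simp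
  qed
  also have "\<dots> = real (card y - t) * subset_sum t h y"
    unfolding subset_sum_def by (simp add: sum_distrib_left)
  finally show ?thesis .
qed

lemma subset_sum_insert:
  assumes y: "finite y" and a: "a \<notin> y"
  shows "subset_sum (Suc s) h (insert a y) =
    subset_sum (Suc s) h y + (\<Sum>x | x \<subseteq> y \<and> card x = s. h (insert a x))"
proof -
  let ?P = "{x. x \<subseteq> y \<and> card x = Suc s}"
  let ?P' = "{x. x \<subseteq> y \<and> card x = s}"
  have "{x. x \<subseteq> insert a y \<and> card x = Suc s} = ?P \<union> insert a ` ?P'"
  proof (intro equalityI subsetI)
    fix x assume x: "x \<in> {x. x \<subseteq> insert a y \<and> card x = Suc s}"
    show "x \<in> ?P \<union> insert a ` ?P'"
    proof (cases "a \<in> x")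
      case True
      then have "x - {a} \<in> ?P'" "x = insert a (x - {a})" using x y by (auto simp: finite_subset)
      then show ?thesis by blast
    qed (use x in auto)
  next
    fix x assume "x \<in> ?P \<union> insert a ` ?P'"
    then show "x \<in> {x. x \<subseteq> insert a y \<and> card x = Suc s}"
      using a y by (auto simp: finite_subset card_insert_if subset_iff)
  qed
  moreover have "?P \<inter> insert a ` ?P' = {}" using a by auto
  moreover have "inj_on (insert a) ?P'"
    by (rule inj_onI) (use a in \<open>auto simp: insert_ident\<close>)
  ultimately show ?thesis
    unfolding subset_sum_def using finite_subsets_card[OF y]
    by (simp add: sum.union_disjoint sum.reindex)
qed

lemma sum_subsets_sum_insert:
  assumes y: "finite y"
  shows "(\<Sum>x | x \<subseteq> y \<and> card x = s. \<Sum>a\<in>y - x. h (insert a x)) = real (Suc s) * subset_sum (Suc s) h y"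
proof -
  let ?P = "{x. x \<subseteq> y \<and> card x = Suc s}"
  let ?P' = "{x. x \<subseteq> y \<and> card x = s}"
  have fin: "finite ?P" "finite ?P'" using finite_subsets_card[OF y] by auto
  have "(\<Sum>x\<in>?P'. \<Sum>a\<in>y - x. h (insert a x)) = (\<Sum>(x, a)\<in>Sigma ?P' (\<lambda>x. y - x). h (insert a x))"
    using fin y by (simp add: sum.Sigma)
  also have "\<dots> = (\<Sum>(x, a)\<in>Sigma ?P (\<lambda>x. x). h x)"
  proof (rule sum.reindex_bij_witness[of _ "\<lambda>(x, a). (x - {a}, a)" "\<lambda>(x, a). (insert a x, a)"])
    fix q assume "q \<in> Sigma ?P (\<lambda>x. x)"
    then show "(case case q of (x, a) \<Rightarrow> (x - {a}, a) of (x, a) \<Rightarrow> (insert a x, a)) = q"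
      "(case q of (x, a) \<Rightarrow> (x - {a}, a)) \<in> Sigma ?P' (\<lambda>x. y - x)"
      using y by (auto simp: finite_subset insert_absorb card_Diff_singleton)
  qed (use y in \<open>auto simp: finite_subset card_insert_if subset_iff\<close>)
  also have "\<dots> = (\<Sum>x\<in>?P. \<Sum>a\<in>x. h x)"
    by (rule sum.Sigma[symmetric]) (use fin y in \<open>auto intro: finite_subset\<close>)
  also have "\<dots> = real (Suc s) * subset_sum (Suc s) h y"
    unfolding subset_sum_def by (simp add: sum_distrib_left)
  finally show ?thesis .
qed

lemma finite_sphere_layer: "finite (sphere_layer n i)"
  unfolding sphere_layer_def by (rule finite_subset[of _ "Pow {1..n}"]) auto

lemma finite_if_in_sphere_layer: "y \<in> sphere_layer n i \<Longrightarrow> finite y"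
  unfolding sphere_layer_def by (auto intro: finite_subset)

lemma card_sphere_layer: "card (sphere_layer n i) = n choose i"
  unfolding sphere_layer_def using n_subsets[of "{1..n}" i] by simp

lemma hball_altdef: "hball n r = {x. x \<subseteq> {1..n} \<and> card x \<le> r}"
  unfolding hball_def sphere_layer_def by auto

lemma finite_hball: "finite (hball n r)"
  unfolding hball_altdef by (rule finite_subset[of _ "Pow {1..n}"]) auto

lemma card_hball: "card (hball n r) = (\<Sum>i\<in>{0..r}. n choose i)"
  unfolding hball_def card_sphere_layer[symmetric]
  by (rule card_UN_disjoint) (auto simp: finite_sphere_layer sphere_layer_def)

definition down_op :: "nat \<Rightarrow> nat \<Rightarrow> (nat set \<Rightarrow> real) \<Rightarrow> (nat set \<Rightarrow> real)" where
  "down_op n t h =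
     (\<lambda>w. if w \<subseteq> {1..n} \<and> card w + 1 = t then \<Sum>a\<in>{1..n} - w. h (insert a w) else 0)"

definition harmonic :: "nat \<Rightarrow> nat \<Rightarrow> (nat set \<Rightarrow> real) set" where
  "harmonic n t = {h \<in> funs_on (sphere_layer n t). down_op n t h = 0}"

lemma down_op_eq_0D:
  assumes "down_op n t h = 0" "w \<subseteq> {1..n}" "card w + 1 = t"
  shows "(\<Sum>a\<in>{1..n} - w. h (insert a w)) = 0"
proof -
  have "down_op n t h w = 0" using assms(1) by simp
  then show ?thesis using assms(2,3) unfolding down_op_def by simp
qed

lemma sum_subset_sum_insert:
  assumes down: "down_op n t h = 0" and y: "y \<subseteq> {1..n}"
  shows "(\<Sum>a\<in>{1..n} - y. subset_sum t h (insert a y)) =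
    (real n - real (card y) - real t) * subset_sum t h y"
proof -
  have fy: "finite y" using y by (rule finite_subset) simp
  have card: "card ({1..n} - y) = n - card y" "card y \<le> n"
    using y by (auto simp: card_Diff_subset fy intro: card_mono[of "{1..n}", simplified])
  show ?thesis
  proof (cases t)
    case 0
    have "subset_sum 0 h Y = h {}" if "finite Y" for Y
      unfolding subset_sum_def using that by (simp add: finite_subset[OF _ that] cong: conj_cong)
    then show ?thesis using 0 fy card by (simp add: of_nat_diff)
  next
    case (Suc s)
    let ?P' = "{x. x \<subseteq> y \<and> card x = s}"
    have inner: "(\<Sum>a\<in>{1..n} - y. h (insert a x)) = - (\<Sum>a\<in>y - x. h (insert a x))" if x: "x \<in> ?P'" for x
    proof -
      have "{1..n} - x = ({1..n} - y) \<union> (y - x)" using x y by auto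
      moreover have "(\<Sum>a\<in>({1..n} - y) \<union> (y - x). h (insert a x))
          = (\<Sum>a\<in>{1..n} - y. h (insert a x)) + (\<Sum>a\<in>y - x. h (insert a x))"
        using fy by (intro sum.union_disjoint) auto
      moreover have "(\<Sum>a\<in>{1..n} - x. h (insert a x)) = 0"
        using down_op_eq_0D[OF down, of x] x y Suc by auto
      ultimately show ?thesis by simp
    qed
    have "(\<Sum>a\<in>{1..n} - y. subset_sum t h (insert a y))
        = (\<Sum>a\<in>{1..n} - y. subset_sum t h y + (\<Sum>x\<in>?P'. h (insert a x)))"
      using subset_sum_insert[OF fy] Suc by simp
    also have "\<dots> = real (n - card y) * subset_sum t h y + (\<Sum>x\<in>?P'. \<Sum>a\<in>{1..n} - y. h (insert a x))"
      using card by (simp add: sum.distrib sum.swap[of _ _ ?P'])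
    also have "(\<Sum>x\<in>?P'. \<Sum>a\<in>{1..n} - y. h (insert a x)) = (\<Sum>x\<in>?P'. - (\<Sum>a\<in>y - x. h (insert a x)))"
      using inner by (rule sum.cong[OF refl])
    also have "\<dots> = - (\<Sum>x\<in>?P'. \<Sum>a\<in>y - x. h (insert a x))"
      by (rule sum_negf)
    also have "\<dots> = - real t * subset_sum t h y"
      using sum_subsets_sum_insert[OF fy, of h s] Suc by (simp add: algebra_simps)
    finally show ?thesis using card by (simp add: of_nat_diff algebra_simps)
  qed
qed

lemma sum_sphere_layer_delete:
  fixes F G :: "nat set \<Rightarrow> real"
  assumes "i \<ge> 1"
  shows "(\<Sum>y\<in>sphere_layer n i. F y * (\<Sum>a\<in>y. G (y - {a})))
       = (\<Sum>w\<in>sphere_layer n (i - 1). G w * (\<Sum>a\<in>{1..n} - w. F (insert a w)))"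
proof -
  let ?A = "Sigma (sphere_layer n i) (\<lambda>y. y)"
  let ?B = "Sigma (sphere_layer n (i - 1)) (\<lambda>w. {1..n} - w)"
  have "(\<Sum>y\<in>sphere_layer n i. F y * (\<Sum>a\<in>y. G (y - {a}))) = (\<Sum>(y, a)\<in>?A. F y * G (y - {a}))"
    by (simp add: sum.Sigma[symmetric] finite_sphere_layer finite_if_in_sphere_layer sum_distrib_left)
  also have "\<dots> = (\<Sum>(w, a)\<in>?B. G w * F (insert a w))"
  proof (rule sum.reindex_bij_witness[of _ "\<lambda>(w, a). (insert a w, a)" "\<lambda>(y, a). (y - {a}, a)"])
    fix p assume p: "p \<in> ?A"
    obtain y a where pa: "p = (y, a)" by (cases p)
    have y: "y \<subseteq> {1..n}" "card y = i" "a \<in> y" "finite y"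
      using p pa finite_if_in_sphere_layer[of y n i] unfolding sphere_layer_def by auto
    show "(case case p of (y, a) \<Rightarrow> (y - {a}, a) of (w, a) \<Rightarrow> (insert a w, a)) = p"
      using pa y by auto
    show "(case p of (y, a) \<Rightarrow> (y - {a}, a)) \<in> ?B"
      using pa y unfolding sphere_layer_def by auto
    show "(case case p of (y, a) \<Rightarrow> (y - {a}, a) of (w, a) \<Rightarrow> G w * F (insert a w))
        = (case p of (y, a) \<Rightarrow> F y * G (y - {a}))"
      using pa y by (simp add: insert_absorb mult.commute)
  next
    fix q assume q: "q \<in> ?B"
    obtain w a where qa: "q = (w, a)" by (cases q)
    have w: "w \<subseteq> {1..n}" "card w = i - 1" "a \<in> {1..n}" "a \<notin> w" "finite w"
      using q qa finite_if_in_sphere_layer[of w n "i - 1"] unfolding sphere_layer_def by auto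
    show "(case case q of (w, a) \<Rightarrow> (insert a w, a) of (y, a) \<Rightarrow> (y - {a}, a)) = q"
      using qa w by auto
    show "(case q of (w, a) \<Rightarrow> (insert a w, a)) \<in> ?A"
      using qa w assms unfolding sphere_layer_def by auto
  qed
  also have "\<dots> = (\<Sum>w\<in>sphere_layer n (i - 1). G w * (\<Sum>a\<in>{1..n} - w. F (insert a w)))"
    by (simp add: sum.Sigma[symmetric] finite_sphere_layer sum_distrib_left)
  finally show ?thesis .
qed

lemma sum_sphere_layer_subset_sum_orthogonal:
  assumes down: "down_op n t h = 0" and "s < t"
  shows "(\<Sum>y\<in>sphere_layer n i. subset_sum t h y * subset_sum s g y) = 0"
proof (induction i)
  case 0
  have "subset_sum t h y = 0" if "y \<in> sphere_layer n 0" for y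
    using that assms(2) finite_if_in_sphere_layer[OF that]
    by (intro subset_sum_eq_0_if_card_less) (auto simp: sphere_layer_def)
  then show ?case by simp
next
  case (Suc i)
  let ?I = "\<lambda>j. \<Sum>y\<in>sphere_layer n j. subset_sum t h y * subset_sum s g y"
  show ?case
  proof (cases "Suc i < t")
    case True
    have "subset_sum t h y = 0" if "y \<in> sphere_layer n (Suc i)" for y
      using that True finite_if_in_sphere_layer[OF that]
      by (intro subset_sum_eq_0_if_card_less) (auto simp: sphere_layer_def)
    then show ?thesis by simp
  next
    case False
    have "real (Suc i - s) * ?I (Suc i)
        = (\<Sum>y\<in>sphere_layer n (Suc i). subset_sum t h y * (real (card y - s) * subset_sum s g y))"
      by (simp add: sum_distrib_left sphere_layer_def algebra_simps)
    also have "\<dots> = (\<Sum>y\<in>sphere_layer n (Suc i). subset_sum t h y * (\<Sum>a\<in>y. subset_sum s g (y - {a})))"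
      by (rule sum.cong) (simp_all add: sum_subset_sum_delete finite_if_in_sphere_layer)
    also have "\<dots> = (\<Sum>w\<in>sphere_layer n i. subset_sum s g w * (\<Sum>a\<in>{1..n} - w. subset_sum t h (insert a w)))"
      using sum_sphere_layer_delete[of "Suc i"] by simp
    also have "\<dots> = (\<Sum>w\<in>sphere_layer n i. subset_sum s g w * ((real n - real (card w) - real t) * subset_sum t h w))"
    proof (rule sum.cong[OF refl])
      fix w assume "w \<in> sphere_layer n i"
      then have "w \<subseteq> {1..n}" by (simp add: sphere_layer_def)
      then show "subset_sum s g w * (\<Sum>a\<in>{1..n} - w. subset_sum t h (insert a w))
          = subset_sum s g w * ((real n - real (card w) - real t) * subset_sum t h w)"
        using sum_subset_sum_insert[OF down] by simp
    qed
    also have "\<dots> = (real n - real i - real t) * ?I i"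
      by (simp add: sum_distrib_left sphere_layer_def algebra_simps)
    also have "\<dots> = 0" using Suc.IH by simp
    finally show ?thesis using False assms(2) by simp
  qed
qed

section \<open>The adjacency operator of the ball\<close>

lemma hdist_sym: "hdist x y = hdist y x"
  unfolding hdist_def by (simp add: Un_commute)

lemma hdist_delete: "a \<in> y \<Longrightarrow> hdist y (y - {a}) = 1"
proof -
  assume "a \<in> y"
  then have "(y - (y - {a})) \<union> ((y - {a}) - y) = {a}" by auto
  then show ?thesis unfolding hdist_def by simp
qed

lemma hdist_insert: "a \<notin> y \<Longrightarrow> hdist y (insert a y) = 1"
proof -
  assume "a \<notin> y"
  then have "(y - insert a y) \<union> (insert a y - y) = {a}" by auto
  then show ?thesis unfolding hdist_def by simp
qed

lemma hdist_eq_1_cases: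
  assumes "hdist y z = 1"
  shows "(\<exists>a\<in>y. z = y - {a}) \<or> (\<exists>a. a \<notin> y \<and> z = insert a y)"
proof -
  obtain a where a: "(y - z) \<union> (z - y) = {a}"
    using assms unfolding hdist_def by (auto simp: card_1_singleton_iff)
  have diff: "(x \<in> y \<and> x \<notin> z \<or> x \<in> z \<and> x \<notin> y) \<longleftrightarrow> x = a" for x
  proof -
    have "x \<in> (y - z) \<union> (z - y) \<longleftrightarrow> x \<in> {a}" using a by simp
    then show ?thesis by simp
  qed
  show ?thesis
  proof (cases "a \<in> y")
    case True
    have "z = y - {a}"
    proof (rule set_eqI)
      fix x show "x \<in> z \<longleftrightarrow> x \<in> y - {a}" using diff[of x] diff[of a] True by blast
    qed
    then show ?thesis using True by blast
  next
    case False
    have "z = insert a y"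
    proof (rule set_eqI)
      fix x show "x \<in> z \<longleftrightarrow> x \<in> insert a y" using diff[of x] diff[of a] False by blast
    qed
    then show ?thesis using False by blast
  qed
qed

lemma adj_op_eq:
  assumes y: "y \<in> hball n r" and f: "f \<in> funs_on (hball n r)"
  shows "adj_op n r f y = (\<Sum>a\<in>y. f (y - {a})) + (\<Sum>a\<in>{1..n} - y. f (insert a y))"
proof -
  have yn: "y \<subseteq> {1..n}" using y by (simp add: hball_altdef)
  have fy: "finite y" using yn by (rule finite_subset) simp
  let ?N1 = "(\<lambda>a. y - {a}) ` y"
  let ?N2 = "(\<lambda>a. insert a y) ` ({1..n} - y)"
  let ?S = "{z\<in>hball n r. hdist y z = 1}"
  have "?S \<subseteq> ?N1 \<union> ?N2"
  proof
    fix z assume z: "z \<in> ?S"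
    then have "z \<subseteq> {1..n}" by (simp add: hball_altdef)
    then show "z \<in> ?N1 \<union> ?N2"
      using hdist_eq_1_cases[of y z] z by blast
  qed
  moreover have "f z = 0" if z: "z \<in> (?N1 \<union> ?N2) - ?S" for z
  proof -
    have "hdist y z = 1" using z hdist_delete hdist_insert by auto
    then have "z \<notin> hball n r" using z by auto
    then show ?thesis using f unfolding funs_on_def by auto
  qed
  ultimately have "sum f ?S = sum f (?N1 \<union> ?N2)"
    using fy by (intro sum.mono_neutral_left) auto
  also have "\<dots> = sum f ?N1 + sum f ?N2"
    by (rule sum.union_disjoint) (use fy in auto)
  also have "sum f ?N1 = (\<Sum>a\<in>y. f (y - {a}))"
    by (rule sum.reindex_cong[of "\<lambda>a. y - {a}"]) (auto simp: inj_on_def)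
  also have "sum f ?N2 = (\<Sum>a\<in>{1..n} - y. f (insert a y))"
    by (rule sum.reindex_cong[of "\<lambda>a. insert a y"]) (auto simp: inj_on_def insert_ident)
  finally show ?thesis using y unfolding adj_op_def by simp
qed

definition inner_on :: "nat set set \<Rightarrow> (nat set \<Rightarrow> real) \<Rightarrow> (nat set \<Rightarrow> real) \<Rightarrow> real" where
  "inner_on X f g = (\<Sum>x\<in>X. f x * g x)"

lemma inner_on_sym: "inner_on X f g = inner_on X g f"
  unfolding inner_on_def by (simp add: mult.commute)

lemma inner_on_scale_right: "inner_on X f (fscale c g) = c * inner_on X f g"
  unfolding inner_on_def by (simp add: fscale_def sum_distrib_left algebra_simps)

lemma inner_on_scale_left: "inner_on X (fscale c f) g = c * inner_on X f g"
  unfolding inner_on_def by (simp add: fscale_def sum_distrib_left algebra_simps)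

lemma subspace_inner_on_eq_0: "fvs.subspace {g. inner_on X f g = 0}"
  unfolding fvs.subspace_def inner_on_def
  by (auto simp: fscale_def sum.distrib algebra_simps sum_distrib_left[symmetric])

lemma inner_on_span_eq_0:
  "(\<And>g. g \<in> S \<Longrightarrow> inner_on X f g = 0) \<Longrightarrow> g \<in> fvs.span S \<Longrightarrow> inner_on X f g = 0"
  using fvs.span_induct[of g S "\<lambda>g. inner_on X f g = 0"] subspace_inner_on_eq_0 by blast

lemma inner_on_self_eq_0:
  assumes "finite X" "f \<in> funs_on X" "inner_on X f f = 0"
  shows "f = 0"
proof
  fix y
  have "\<forall>z\<in>X. f z * f z = 0"
    using assms(1,3) unfolding inner_on_def by (subst (asm) sum_nonneg_eq_0_iff) auto
  then show "f y = 0 y" using assms(2) by (cases "y \<in> X") (auto simp: funs_on_def)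
qed

lemma layer_inner_eq_inner_on: "layer_inner n i = inner_on (sphere_layer n i)"
  unfolding layer_inner_def inner_on_def by (simp add: fun_eq_iff)

lemma inner_on_hball: "inner_on (hball n r) f g = (\<Sum>i\<in>{0..r}. inner_on (sphere_layer n i) f g)"
  unfolding inner_on_def hball_def
  by (rule sum.UNION_disjoint) (auto simp: finite_sphere_layer sphere_layer_def)

lemma adj_op_self_adjoint:
  "inner_on (hball n r) (adj_op n r f) g = inner_on (hball n r) f (adj_op n r g)"
proof -
  let ?B = "hball n r"
  have expand: "adj_op n r f x * g x = (\<Sum>y\<in>?B. if hdist x y = 1 then f y * g x else 0)"
    if "x \<in> ?B" for f g x
  proof -
    have "adj_op n r f x * g x = (\<Sum>y\<in>{y\<in>?B. hdist x y = 1}. f y * g x)"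
      using that unfolding adj_op_def by (simp add: sum_distrib_right)
    then show ?thesis by (simp add: sum.inter_filter[OF finite_hball])
  qed
  have "inner_on ?B (adj_op n r f) g = (\<Sum>x\<in>?B. \<Sum>y\<in>?B. if hdist x y = 1 then f y * g x else 0)"
    unfolding inner_on_def by (rule sum.cong) (simp_all add: expand)
  also have "\<dots> = (\<Sum>y\<in>?B. \<Sum>x\<in>?B. if hdist x y = 1 then f y * g x else 0)"
    by (rule sum.swap)
  also have "\<dots> = (\<Sum>y\<in>?B. \<Sum>x\<in>?B. if hdist y x = 1 then g x * f y else 0)"
  proof (intro sum.cong refl)
    fix x y
    show "(if hdist x y = 1 then f y * g x else 0) = (if hdist y x = 1 then g x * f y else 0)"
      by (simp add: hdist_sym[of x y] mult.commute)
  qed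
  also have "\<dots> = inner_on ?B f (adj_op n r g)"
    unfolding inner_on_def
  proof (rule sum.cong[OF refl])
    fix y assume y: "y \<in> ?B"
    show "(\<Sum>x\<in>?B. if hdist y x = 1 then g x * f y else 0) = f y * adj_op n r g y"
      using expand[OF y, of g f] by (simp add: mult.commute)
  qed
  finally show ?thesis .
qed

lemma inner_on_adj_eigenspaces:
  assumes "f \<in> adj_eigenspace n r mu" "g \<in> adj_eigenspace n r nu" "mu \<noteq> nu"
  shows "inner_on (hball n r) f g = 0"
proof -
  have "mu * inner_on (hball n r) f g = inner_on (hball n r) (adj_op n r f) g"
    using assms(1) by (simp add: adj_eigenspace_def inner_on_sym[of _ _ g] inner_on_scale_right)
  also have "\<dots> = inner_on (hball n r) f (adj_op n r g)" by (rule adj_op_self_adjoint)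
  also have "\<dots> = nu * inner_on (hball n r) f g"
    using assms(2) by (simp add: adj_eigenspace_def inner_on_scale_right)
  finally show ?thesis using assms(3) by simp
qed

lemma funs_on_subspace: "fvs.subspace (funs_on X)"
  unfolding fvs.subspace_def funs_on_def by (auto simp: fscale_def)

lemma adj_op_add: "adj_op n r (f + g) = adj_op n r f + adj_op n r g"
  unfolding adj_op_def by (simp add: fun_eq_iff sum.distrib)

lemma adj_op_scale: "adj_op n r (fscale c f) = fscale c (adj_op n r f)"
  unfolding adj_op_def fscale_def by (simp add: fun_eq_iff sum_distrib_left)

lemma adj_eigenspace_subspace: "fvs.subspace (adj_eigenspace n r mu)"
proof -
  have "adj_op n r 0 = 0" by (simp add: adj_op_def fun_eq_iff)
  then show ?thesis
    using funs_on_subspace[of "hball n r"]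
    unfolding fvs.subspace_def adj_eigenspace_def
    by (simp add: adj_op_add adj_op_scale fvs.scale_right_distrib fvs.scale_left_commute)
qed

section \<open>Dimensions of spaces of real functions\<close>

lemma fvs_finite_basis_exists:
  assumes "V \<subseteq> fvs.span S" "finite S"
  obtains B where "B \<subseteq> V" "fvs.independent B" "V \<subseteq> fvs.span B" "card B = fvs.dim V" "finite B"
proof -
  obtain B where B: "B \<subseteq> V" "fvs.independent B" "V \<subseteq> fvs.span B" "card B = fvs.dim V"
    by (rule fvs.basis_exists)
  have "finite B"
    using fvs.independent_span_bound[OF assms(2) B(2)] B(1) assms(1) by auto
  then show ?thesis using B that by blast
qed

lemma fvs_independent_card_le_dim:
  assumes "B \<subseteq> V" "fvs.independent B" "V \<subseteq> fvs.span S" "finite S"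
  shows "card B \<le> fvs.dim V"
proof -
  obtain B' where B': "B \<subseteq> B'" "B' \<subseteq> V" "fvs.independent B'" "V \<subseteq> fvs.span B'"
    using fvs.maximal_independent_subset_extend[OF assms(1,2)] by blast
  have "finite B'"
    using fvs.independent_span_bound[OF assms(4) B'(3)] B'(2) assms(3) by auto
  moreover have "card B' = fvs.dim V" by (rule fvs.basis_card_eq_dim[OF B'(2,4,3)])
  ultimately show ?thesis using card_mono[OF _ B'(1)] by simp
qed

lemma fvs_dim_mono:
  assumes "V \<subseteq> W" "W \<subseteq> fvs.span S" "finite S"
  shows "fvs.dim V \<le> fvs.dim W"
proof -
  obtain B where B: "W \<subseteq> fvs.span B" "card B = fvs.dim W" "finite B"
    by (rule fvs_finite_basis_exists[OF assms(2,3)])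
  have "V \<subseteq> fvs.span B" using assms(1) B(1) by (rule subset_trans)
  from fvs.dim_le_card[OF this B(3)] show ?thesis unfolding B(2) .
qed

lemma fvs_dim_eq_0:
  assumes "fvs.dim V = 0" "V \<subseteq> fvs.span S" "finite S"
  shows "V \<subseteq> {0}"
proof -
  obtain B where B: "V \<subseteq> fvs.span B" "card B = fvs.dim V" "finite B"
    by (rule fvs_finite_basis_exists[OF assms(2,3)])
  then have "B = {}" using assms(1) by simp
  then show ?thesis using B(1) by simp
qed

lemma fvs_dim_image_le:
  assumes "Vector_Spaces.linear fscale fscale f" "V \<subseteq> fvs.span S" "finite S"
  shows "fvs.dim (f ` V) \<le> fvs.dim V"
proof -
  interpret f: Vector_Spaces.linear fscale fscale f by fact
  obtain B where B: "V \<subseteq> fvs.span B" "card B = fvs.dim V" "finite B"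
    by (rule fvs_finite_basis_exists[OF assms(2,3)])
  have "fvs.dim (f ` V) \<le> card (f ` B)"
    using f.spans_image[OF B(1)] B(3) by (intro fvs.dim_le_card) auto
  also have "\<dots> \<le> card B" using B(3) by (rule card_image_le)
  finally show ?thesis using B(2) by simp
qed

lemma fvs_dim_le_dim_kernel_add_dim_image:
  assumes "Vector_Spaces.linear fscale fscale f" "fvs.subspace V" "V \<subseteq> fvs.span S" "finite S"
    "f ` V \<subseteq> fvs.span S'" "finite S'"
  shows "fvs.dim V \<le> fvs.dim {v\<in>V. f v = 0} + fvs.dim (f ` V)"
proof -
  interpret f: Vector_Spaces.linear fscale fscale f by fact
  let ?K = "{v\<in>V. f v = 0}"
  have "?K \<subseteq> fvs.span S" using assms(3) by blast
  then obtain BK where BK: "BK \<subseteq> ?K" "?K \<subseteq> fvs.span BK" "card BK = fvs.dim ?K" "finite BK"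
    using assms(4) by (rule fvs_finite_basis_exists)
  obtain C where C: "C \<subseteq> f ` V" "f ` V \<subseteq> fvs.span C" "card C = fvs.dim (f ` V)" "finite C"
    by (rule fvs_finite_basis_exists[OF assms(5,6)])
  define pre where "pre = inv_into V f"
  have pre: "pre c \<in> V" "f (pre c) = c" if "c \<in> C" for c
  proof -
    have c: "c \<in> f ` V" using that C(1) by blast
    show "pre c \<in> V" unfolding pre_def by (rule inv_into_into[OF c])
    show "f (pre c) = c" unfolding pre_def by (rule f_inv_into_f[OF c])
  qed
  have "V \<subseteq> fvs.span (BK \<union> pre ` C)"
  proof
    fix v assume v: "v \<in> V"
    obtain u where u: "f v = (\<Sum>c\<in>C. fscale (u c) c)"
      using v C(2,4) fvs.span_finite[OF C(4)] by blast
    define w where "w = (\<Sum>c\<in>C. fscale (u c) (pre c))"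
    have wV: "w \<in> V"
      unfolding w_def using pre by (intro fvs.subspace_sum[OF assms(2)] fvs.subspace_scale[OF assms(2)]) simp
    have w_span: "w \<in> fvs.span (BK \<union> pre ` C)"
      unfolding w_def by (intro fvs.span_sum fvs.span_scale fvs.span_base) simp
    have "f w = f v" unfolding w_def u by (simp add: f.sum f.scale pre)
    then have "v - w \<in> ?K" using v wV fvs.subspace_diff[OF assms(2)] by (simp add: f.diff)
    then have "v - w \<in> fvs.span (BK \<union> pre ` C)"
      using BK(2) fvs.span_mono[of BK "BK \<union> pre ` C"] by blast
    then show "v \<in> fvs.span (BK \<union> pre ` C)" using fvs.span_add[OF _ w_span] by fastforce
  qed
  then have "fvs.dim V \<le> card (BK \<union> pre ` C)" using BK(4) C(4) by (intro fvs.dim_le_card) auto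
  also have "\<dots> \<le> card BK + card C"
    using card_Un_le[of BK "pre ` C"] card_image_le[OF C(4), of pre] by linarith
  finally show ?thesis using BK(3) C(3) by simp
qed


lemma sum_fun_apply: "(\<Sum>i\<in>A. F i) x = (\<Sum>i\<in>A. F i x)"
  by (induction A rule: infinite_finite_induct) auto

lemma fvs_linearI:
  assumes "\<And>f g. L (f + g) = L f + L g" "\<And>c f. L (fscale c f) = fscale c (L f)"
  shows "Vector_Spaces.linear fscale fscale L"
  using assms by (simp add: Vector_Spaces.linear_iff fvs.vector_space_axioms)

lemma restr_linear: "Vector_Spaces.linear fscale fscale (restr X)"
  by (rule fvs_linearI) (auto simp: restr_def fscale_def fun_eq_iff)

lemma funs_on_subset_span_indicators:
  assumes "finite X"
  shows "funs_on X \<subseteq> fvs.span ((\<lambda>z. indicator {z}) ` X)"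
proof
  fix f assume f: "f \<in> funs_on X"
  have "f = (\<Sum>z\<in>X. fscale (f z) (indicator {z}))"
  proof
    fix x
    have "(\<Sum>z\<in>X. fscale (f z) (indicator {z})) x = (\<Sum>z\<in>X. if z = x then f z else 0)"
      unfolding sum_fun_apply by (intro sum.cong) (simp_all add: fscale_def indicator_def)
    also have "\<dots> = f x" using f assms by (auto simp: funs_on_def)
    finally show "f x = (\<Sum>z\<in>X. fscale (f z) (indicator {z})) x" by simp
  qed
  also have "\<dots> \<in> fvs.span ((\<lambda>z. indicator {z}) ` X)"
    by (intro fvs.span_sum fvs.span_scale fvs.span_base) simp
  finally show "f \<in> fvs.span ((\<lambda>z. indicator {z}) ` X)" .
qed

lemma dim_funs_on:
  assumes "finite X"
  shows "fvs.dim (funs_on X) = card X"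
proof -
  let ?B = "(\<lambda>z. indicator {z} :: nat set \<Rightarrow> real) ` X"
  have inj: "inj_on (\<lambda>z. indicator {z} :: nat set \<Rightarrow> real) X"
  proof (rule inj_onI)
    fix x y assume "(indicator {x} :: nat set \<Rightarrow> real) = indicator {y}"
    then have "(indicator {x} x :: real) = indicator {y} x" by simp
    then show "x = y" by (cases "x = y") (auto simp: indicator_def)
  qed
  have "fvs.independent ?B"
  proof (rule fvs.independent_if_scalars_zero)
    fix u d assume sum0: "(\<Sum>b\<in>?B. fscale (u b) b) = 0" and d: "d \<in> ?B"
    then obtain z where z: "z \<in> X" "d = indicator {z}" by blast
    have "(\<Sum>b\<in>?B. fscale (u b) b) z = (\<Sum>w\<in>X. if w = z then u (indicator {w}) else 0)"
      unfolding sum_fun_apply sum.reindex[OF inj]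
      by (intro sum.cong) (simp_all add: fscale_def indicator_def)
    also have "\<dots> = u d" using z assms by simp
    finally show "u d = 0" using sum0 by simp
  qed (use assms in simp)
  moreover have "?B \<subseteq> funs_on X" by (auto simp: funs_on_def indicator_def)
  ultimately have "card ?B = fvs.dim (funs_on X)"
    using fvs.basis_card_eq_dim funs_on_subset_span_indicators[OF assms] by blast
  then show ?thesis using card_image[OF inj] by simp
qed

lemma dim_le_card_if_subset_funs_on:
  assumes "V \<subseteq> funs_on X" "finite X"
  shows "fvs.dim V \<le> card X"
  using fvs_dim_mono[OF assms(1) funs_on_subset_span_indicators] dim_funs_on assms(2)
  by simp

lemma fvs_independent_Un:
  assumes X: "fvs.subspace X" "BX \<subseteq> X" "fvs.independent BX" "finite BX"
    and Y: "fvs.subspace Y" "BY \<subseteq> Y" "fvs.independent BY" "finite BY"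
    and XY: "X \<inter> Y \<subseteq> {0}"
  shows "fvs.independent (BX \<union> BY)" and "BX \<inter> BY = {}"
proof -
  show disj: "BX \<inter> BY = {}"
  proof (rule ccontr)
    assume "BX \<inter> BY \<noteq> {}"
    then have "0 \<in> BX" using XY X(2) Y(2) by blast
    then show False using X(3) fvs.dependent_zero by blast
  qed
  show "fvs.independent (BX \<union> BY)"
  proof (rule fvs.independent_if_scalars_zero)
    fix u v assume sum0: "(\<Sum>x\<in>BX \<union> BY. fscale (u x) x) = 0" and v: "v \<in> BX \<union> BY"
    let ?sx = "\<Sum>x\<in>BX. fscale (u x) x"
    let ?sy = "\<Sum>x\<in>BY. fscale (u x) x"
    have "?sx = - ?sy"
      using sum0 disj X(4) Y(4) by (simp add: sum.union_disjoint eq_neg_iff_add_eq_0)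
    moreover have "?sx \<in> X" "?sy \<in> Y"
      using X(1,2) Y(1,2) by (auto intro!: fvs.subspace_sum fvs.subspace_scale)
    ultimately have "?sx \<in> X \<inter> Y"
      using fvs.subspace_neg[OF Y(1)] by simp
    then have "?sx = 0" using XY by blast
    then have "?sy = 0" using \<open>?sx = - ?sy\<close> by simp
    show "u v = 0"
    proof (cases "v \<in> BX")
      case True
      then show ?thesis using fvs.independentD[OF X(3,4) subset_refl \<open>?sx = 0\<close>] by blast
    next
      case False
      then show ?thesis using v fvs.independentD[OF Y(3,4) subset_refl \<open>?sy = 0\<close>] by blast
    qed
  qed (use X(4) Y(4) in simp)
qed

lemma dim_union_orthogonal:
  assumes A: "finite A"
    and X: "X \<subseteq> funs_on A" "fvs.subspace X" and Y: "Y \<subseteq> funs_on A" "fvs.subspace Y"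
    and orth: "\<And>x y. x \<in> X \<Longrightarrow> y \<in> Y \<Longrightarrow> inner_on A x y = 0"
  shows "fvs.dim X + fvs.dim Y \<le> fvs.dim (fvs.span (X \<union> Y))"
proof -
  note span_A = funs_on_subset_span_indicators[OF A]
  obtain BX where BX: "BX \<subseteq> X" "fvs.independent BX" "card BX = fvs.dim X" "finite BX"
    using X(1) span_A finite_imageI[OF A] by (rule fvs_finite_basis_exists[OF subset_trans])
  obtain BY where BY: "BY \<subseteq> Y" "fvs.independent BY" "card BY = fvs.dim Y" "finite BY"
    using Y(1) span_A finite_imageI[OF A] by (rule fvs_finite_basis_exists[OF subset_trans])
  have "X \<inter> Y \<subseteq> {0}"
    using inner_on_self_eq_0[OF A] orth X(1) by blast
  note BXY = fvs_independent_Un[OF X(2) BX(1,2,4) Y(2) BY(1,2,4) this]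
  have "BX \<union> BY \<subseteq> fvs.span (X \<union> Y)"
    using BX(1) BY(1) by (auto intro: fvs.span_base)
  moreover have "fvs.span (X \<union> Y) \<subseteq> fvs.span ((\<lambda>z. indicator {z}) ` A)"
    using X(1) Y(1) span_A by (intro fvs.span_minimal) auto
  ultimately have "card (BX \<union> BY) \<le> fvs.dim (fvs.span (X \<union> Y))"
    using A BXY(1) by (intro fvs_independent_card_le_dim) auto
  then show ?thesis using BX BY BXY(2) by (simp add: card_Un_disjoint)
qed

lemma sum_dim_orthogonal_family:
  assumes "finite I" "finite A"
    and sub: "\<And>i. i \<in> I \<Longrightarrow> X i \<subseteq> funs_on A" "\<And>i. i \<in> I \<Longrightarrow> fvs.subspace (X i)"
    and orth: "\<And>i j x y. i \<in> I \<Longrightarrow> j \<in> I \<Longrightarrow> i \<noteq> j \<Longrightarrow> x \<in> X i \<Longrightarrow> y \<in> X j \<Longrightarrow> inner_on A x y = 0"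
  shows "(\<Sum>i\<in>I. fvs.dim (X i)) \<le> fvs.dim (fvs.span (\<Union>i\<in>I. X i))"
  using assms(1) sub orth
proof (induction I rule: finite_induct)
  case (insert j I)
  let ?Y = "fvs.span (\<Union>i\<in>I. X i)"
  have IH: "(\<Sum>i\<in>I. fvs.dim (X i)) \<le> fvs.dim ?Y"
  proof (rule insert.IH)
    fix i i' x y assume "i \<in> I" "i' \<in> I" "i \<noteq> i'" "x \<in> X i" "y \<in> X i'"
    then show "inner_on A x y = 0" by (intro insert.prems(3)) auto
  qed (simp_all add: insert.prems)
  have "?Y \<subseteq> funs_on A"
    using insert.prems(1) funs_on_subspace by (intro fvs.span_minimal) auto
  moreover have "inner_on A x y = 0" if x: "x \<in> X j" and y: "y \<in> ?Y" for x y
  proof (rule inner_on_span_eq_0[OF _ y])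
    fix z assume "z \<in> (\<Union>i\<in>I. X i)"
    then obtain i where "i \<in> I" "z \<in> X i" by blast
    then show "inner_on A x z = 0" using insert.prems(3)[of j i x z] x insert.hyps(2) by auto
  qed
  ultimately have "fvs.dim (X j) + fvs.dim ?Y \<le> fvs.dim (fvs.span (X j \<union> ?Y))"
    using insert.prems(1,2)[of j] by (intro dim_union_orthogonal[OF assms(2)]) simp_all
  also have "fvs.span (X j \<union> ?Y) = fvs.span (\<Union>i\<in>insert j I. X i)"
    by (simp add: fvs.span_Un fvs.span_span)
  finally show ?case using IH insert.hyps by simp
qed simp

lemma sum_dim_orthogonal_family_le_card:
  assumes "finite I" "finite A"
    and "\<And>i. i \<in> I \<Longrightarrow> X i \<subseteq> funs_on A" "\<And>i. i \<in> I \<Longrightarrow> fvs.subspace (X i)"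
    and "\<And>i j x y. i \<in> I \<Longrightarrow> j \<in> I \<Longrightarrow> i \<noteq> j \<Longrightarrow> x \<in> X i \<Longrightarrow> y \<in> X j \<Longrightarrow> inner_on A x y = 0"
  shows "(\<Sum>i\<in>I. fvs.dim (X i)) \<le> card A"
proof -
  have "fvs.span (\<Union>i\<in>I. X i) \<subseteq> funs_on A"
    using assms(3) funs_on_subspace by (intro fvs.span_minimal) auto
  have "(\<Sum>i\<in>I. fvs.dim (X i)) \<le> fvs.dim (fvs.span (\<Union>i\<in>I. X i))"
    by (rule sum_dim_orthogonal_family[OF assms])
  also have "\<dots> \<le> card A"
    by (rule dim_le_card_if_subset_funs_on[OF \<open>fvs.span (\<Union>i\<in>I. X i) \<subseteq> funs_on A\<close> assms(2)])
  finally show ?thesis .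
qed

section \<open>Eigenvectors lifted from harmonic functions\<close>

(* Dividing by the falling factorial N (N - 1) ... (N - k + 1) turns the recurrence of kraw_poly
   into the eigenvalue equation along the layers (lift_coeff_rec), which closes up at k = m
   exactly when mu is a root of kraw_poly N (m + 1). *)
definition lift_coeff :: "real \<Rightarrow> real \<Rightarrow> nat \<Rightarrow> real" where
  "lift_coeff N mu k = poly (kraw_poly N k) mu / (\<Prod>j<k. N - real j)"

lemma lift_coeff_0 [simp]: "lift_coeff N mu 0 = 1"
  by (simp add: lift_coeff_def)

lemma lift_coeff_rec:
  assumes pos: "\<And>j. j < m \<Longrightarrow> N - real j > 0"
    and root: "poly (kraw_poly N (Suc m)) mu = 0" and "k \<le> m"
  shows "(if 1 \<le> k then real k * lift_coeff N mu (k - 1) else 0)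
       + (if k < m then (N - real k) * lift_coeff N mu (Suc k) else 0) = mu * lift_coeff N mu k"
proof -
  define F where "F i = (\<Prod>j<i. N - real j)" for i
  have F_pos: "F i > 0" if "i \<le> m" for i
    unfolding F_def using that pos by (intro prod_pos) auto
  have F_Suc: "F (Suc i) = F i * (N - real i)" for i
    unfolding F_def by simp
  have lower: "(if 1 \<le> k then real k * lift_coeff N mu (k - 1) else 0)
      = (if k = 0 then 0 else real k * (N - real k + 1) * poly (kraw_poly N (k - 1)) mu) / F k"
  proof (cases k)
    case (Suc k')
    then have "N - real k' > 0" using pos \<open>k \<le> m\<close> by simp
    then show ?thesis using Suc F_pos[of k'] \<open>k \<le> m\<close>
      by (simp add: lift_coeff_def F_def[symmetric] F_Suc)
  qed simp
  have upper: "(if k < m then (N - real k) * lift_coeff N mu (Suc k) else 0)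
      = poly (kraw_poly N (Suc k)) mu / F k"
  proof (cases "k < m")
    case True
    then have "N - real k > 0" using pos by simp
    then show ?thesis using True by (simp add: lift_coeff_def F_def[symmetric] F_Suc)
  next
    case False
    then show ?thesis using root \<open>k \<le> m\<close> by simp
  qed
  show ?thesis
    unfolding lower upper using F_pos[OF \<open>k \<le> m\<close>] poly_kraw_poly_Suc[of N k mu]
    by (simp add: lift_coeff_def F_def[symmetric] add_divide_distrib[symmetric])
qed

definition lift :: "nat \<Rightarrow> nat \<Rightarrow> nat \<Rightarrow> real \<Rightarrow> (nat set \<Rightarrow> real) \<Rightarrow> (nat set \<Rightarrow> real)" where
  "lift n r t mu h = (\<lambda>y. if y \<in> hball n r
     then lift_coeff (real n - 2 * real t) mu (card y - t) * subset_sum t h y else 0)"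

lemma lift_apply:
  "y \<in> hball n r \<Longrightarrow> lift n r t mu h y = lift_coeff (real n - 2 * real t) mu (card y - t) * subset_sum t h y"
  by (simp add: lift_def)

lemma lift_in_funs_on: "lift n r t mu h \<in> funs_on (hball n r)"
  unfolding funs_on_def lift_def by simp

lemma lift_linear: "Vector_Spaces.linear fscale fscale (lift n r t mu)"
  by (rule fvs_linearI)
    (auto simp: lift_def fun_eq_iff subset_sum_add subset_sum_scale fscale_def algebra_simps)

lemma adj_op_lift:
  fixes mu :: real
  assumes down: "down_op n t h = 0" and y: "y \<in> hball n r"
  defines "c \<equiv> lift_coeff (real n - 2 * real t) mu"
  shows "adj_op n r (lift n r t mu h) y =
    (real (card y - t) * c (card y - 1 - t)
     + (if card y < r then (real n - real (card y) - real t) * c (Suc (card y) - t) else 0))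
    * subset_sum t h y"
proof -
  have yn: "y \<subseteq> {1..n}" and yr: "card y \<le> r" using y by (auto simp: hball_altdef)
  have fy: "finite y" using yn by (rule finite_subset) simp
  have "(\<Sum>a\<in>y. lift n r t mu h (y - {a})) = (\<Sum>a\<in>y. c (card y - 1 - t) * subset_sum t h (y - {a}))"
  proof (rule sum.cong[OF refl])
    fix a assume "a \<in> y"
    moreover have "y - {a} \<in> hball n r"
      using yn yr card_Diff1_le[of y a] by (auto simp: hball_altdef)
    ultimately show "lift n r t mu h (y - {a}) = c (card y - 1 - t) * subset_sum t h (y - {a})"
      using fy by (simp add: lift_def c_def)
  qed
  also have "\<dots> = c (card y - 1 - t) * (real (card y - t) * subset_sum t h y)"
    by (simp add: sum_distrib_left[symmetric] sum_subset_sum_delete[OF fy])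
  finally have lower: "(\<Sum>a\<in>y. lift n r t mu h (y - {a})) = \<dots>" .
  have upper: "(\<Sum>a\<in>{1..n} - y. lift n r t mu h (insert a y)) = (if card y < r
      then c (Suc (card y) - t) * ((real n - real (card y) - real t) * subset_sum t h y) else 0)"
  proof (cases "card y < r")
    case True
    have "insert a y \<in> hball n r" "card (insert a y) = Suc (card y)" if "a \<in> {1..n} - y" for a
      using that yn True fy by (auto simp: hball_altdef)
    then have "(\<Sum>a\<in>{1..n} - y. lift n r t mu h (insert a y))
        = c (Suc (card y) - t) * (\<Sum>a\<in>{1..n} - y. subset_sum t h (insert a y))"
      by (simp add: lift_def c_def sum_distrib_left)
    then show ?thesis using True sum_subset_sum_insert[OF down yn] by simp
  next
    case False
    have "insert a y \<notin> hball n r" if "a \<in> {1..n} - y" for a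
      using that False yr fy by (auto simp: hball_altdef)
    then show ?thesis using False by (simp add: lift_def)
  qed
  show ?thesis
    unfolding adj_op_eq[OF y lift_in_funs_on] lower upper by (simp add: algebra_simps)
qed

lemma lift_eigen:
  assumes "2 * r \<le> n" "t \<le> r"
    and root: "poly (kraw_poly (real n - 2 * real t) (Suc (r - t))) mu = 0"
    and down: "down_op n t h = 0"
  shows "adj_op n r (lift n r t mu h) = fscale mu (lift n r t mu h)"
proof
  fix y
  let ?c = "lift_coeff (real n - 2 * real t) mu"
  show "adj_op n r (lift n r t mu h) y = fscale mu (lift n r t mu h) y"
  proof (cases "y \<in> hball n r")
    case True
    have fy: "finite y" and yr: "card y \<le> r"
      using True by (auto simp: hball_altdef intro: finite_subset)
    show ?thesis
    proof (cases "card y < t")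
      case True
      then have "subset_sum t h y = 0" by (rule subset_sum_eq_0_if_card_less[OF fy])
      then show ?thesis
        by (simp add: adj_op_lift[OF down \<open>y \<in> hball n r\<close>] lift_apply[OF \<open>y \<in> hball n r\<close>]
          fscale_def)
    next
      case False
      define k where "k = card y - t"
      have rec: "(if 1 \<le> k then real k * ?c (k - 1) else 0)
          + (if k < r - t then (real n - 2 * real t - real k) * ?c (Suc k) else 0) = mu * ?c k"
        using assms(1,2) yr by (intro lift_coeff_rec[OF _ root]) (auto simp: k_def)
      have "card y - 1 - t = k - 1" by (simp add: k_def)
      then have lower: "real (card y - t) * ?c (card y - 1 - t) = (if 1 \<le> k then real k * ?c (k - 1) else 0)"
        by (simp add: k_def)
      have upper: "(if card y < r then (real n - real (card y) - real t) * ?c (Suc (card y) - t) else 0)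
          = (if k < r - t then (real n - 2 * real t - real k) * ?c (Suc k) else 0)"
        using False yr by (auto simp: k_def Suc_diff_le of_nat_diff)
      have "adj_op n r (lift n r t mu h) y = mu * ?c k * subset_sum t h y"
        unfolding adj_op_lift[OF down True] lower upper rec ..
      then show ?thesis by (simp add: lift_apply[OF True] fscale_def k_def)
    qed
  qed (simp add: adj_op_def lift_def fscale_def)
qed

lemma lift_eq_0_below: "x \<subseteq> {1..n} \<Longrightarrow> card x < t \<Longrightarrow> lift n r t mu h x = 0"
  by (simp add: lift_def subset_sum_eq_0_if_card_less finite_subset)

lemma restr_lift_sphere_layer:
  assumes "t \<le> i" "i \<le> r"
  shows "restr (sphere_layer n i) (lift n r t mu h) =
    fscale (lift_coeff (real n - 2 * real t) mu (i - t)) (restr (sphere_layer n i) (subset_sum t h))"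
  using assms unfolding restr_def lift_def fscale_def hball_def
  by (auto simp: fun_eq_iff sphere_layer_def)

lemma restr_lift_self:
  assumes "t \<le> r" "h \<in> funs_on (sphere_layer n t)"
  shows "restr (sphere_layer n t) (lift n r t mu h) = h"
proof
  fix y
  show "restr (sphere_layer n t) (lift n r t mu h) y = h y"
  proof (cases "y \<in> sphere_layer n t")
    case True
    then have "y \<in> hball n r" "subset_sum t h y = h y"
      using assms(1) subset_sum_card_self[OF finite_if_in_sphere_layer[OF True]]
      by (auto simp: hball_def sphere_layer_def)
    then show ?thesis using True by (simp add: restr_def lift_def sphere_layer_def)
  qed (use assms(2) in \<open>simp add: restr_def funs_on_def\<close>)
qed

lemma inner_on_lift_orthogonal:
  assumes "t < t'" and down: "down_op n t' h' = 0"
  shows "inner_on (hball n r) (lift n r t mu h) (lift n r t' mu' h') = 0"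
proof -
  have "inner_on (sphere_layer n i) (lift n r t mu h) (lift n r t' mu' h') = 0" if "i \<le> r" for i
  proof -
    let ?c = "lift_coeff (real n - 2 * real t) mu (i - t) * lift_coeff (real n - 2 * real t') mu' (i - t')"
    have "inner_on (sphere_layer n i) (lift n r t mu h) (lift n r t' mu' h')
        = ?c * (\<Sum>y\<in>sphere_layer n i. subset_sum t' h' y * subset_sum t h y)"
      unfolding inner_on_def sum_distrib_left
      using that by (intro sum.cong) (auto simp: lift_def hball_def sphere_layer_def)
    then show ?thesis
      using sum_sphere_layer_subset_sum_orthogonal[OF down assms(1)] by simp
  qed
  then show ?thesis unfolding inner_on_hball by simp
qed

lemma down_op_linear: "Vector_Spaces.linear fscale fscale (down_op n t)"
  by (rule fvs_linearI)
    (auto simp: down_op_def fun_eq_iff fscale_def sum.distrib sum_distrib_left)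

lemma harmonic_subset_funs_on: "harmonic n t \<subseteq> funs_on (sphere_layer n t)"
  unfolding harmonic_def by blast

lemma harmonic_subspace: "fvs.subspace (harmonic n t)"
proof -
  interpret D: Vector_Spaces.linear fscale fscale "down_op n t" by (rule down_op_linear)
  have "harmonic n t = funs_on (sphere_layer n t) \<inter> {h. down_op n t h = 0}"
    unfolding harmonic_def by blast
  then show ?thesis
    using fvs.subspace_inter[OF funs_on_subspace D.subspace_kernel] by simp
qed

lemma dim_harmonic_ge: "bdiff n t \<le> int (fvs.dim (harmonic n t))"
proof (cases t)
  case 0
  then have "harmonic n t = funs_on (sphere_layer n t)"
    unfolding harmonic_def down_op_def by auto
  then show ?thesis
    using 0 dim_funs_on[OF finite_sphere_layer] by (simp add: bdiff_def card_sphere_layer)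
next
  case (Suc k)
  let ?F = "funs_on (sphere_layer n t)"
  let ?G = "funs_on (sphere_layer n k)"
  note span_F = funs_on_subset_span_indicators[OF finite_sphere_layer, of n t]
  have "down_op n t h x = 0" if "x \<notin> sphere_layer n k" for h x
    using that Suc by (auto simp: down_op_def sphere_layer_def)
  then have image: "down_op n t ` ?F \<subseteq> ?G"
    by (auto simp: funs_on_def)
  have "fvs.dim ?F \<le> fvs.dim (harmonic n t) + fvs.dim (down_op n t ` ?F)"
    unfolding harmonic_def
    by (rule fvs_dim_le_dim_kernel_add_dim_image[OF down_op_linear funs_on_subspace span_F _
      subset_trans[OF image funs_on_subset_span_indicators]]) (simp_all add: finite_sphere_layer)
  moreover have "fvs.dim (down_op n t ` ?F) \<le> n choose k"
    using dim_le_card_if_subset_funs_on[OF image finite_sphere_layer] by (simp add: card_sphere_layer)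
  ultimately show ?thesis
    using Suc dim_funs_on[OF finite_sphere_layer, of n t] by (simp add: bdiff_def card_sphere_layer)
qed

lemma restr_subset_sum_in_U_sp: "restr (sphere_layer n i) (subset_sum t h) \<in> U_sp n i t"
proof -
  have "restr (sphere_layer n i) (subset_sum t h) = (\<Sum>x\<in>sphere_layer n t. fscale (h x) (gz n i x))"
  proof
    fix y
    show "restr (sphere_layer n i) (subset_sum t h) y = (\<Sum>x\<in>sphere_layer n t. fscale (h x) (gz n i x)) y"
    proof (cases "y \<in> sphere_layer n i")
      case True
      have "(\<Sum>x\<in>sphere_layer n t. fscale (h x) (gz n i x)) y
          = (\<Sum>x\<in>sphere_layer n t. if x \<subseteq> y then h x else 0)"
        unfolding sum_fun_apply by (rule sum.cong) (simp_all add: fscale_def gz_def True)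
      also have "\<dots> = sum h {x \<in> sphere_layer n t. x \<subseteq> y}"
        by (rule sum.inter_filter[OF finite_sphere_layer, symmetric])
      also have "{x \<in> sphere_layer n t. x \<subseteq> y} = {x. x \<subseteq> y \<and> card x = t}"
        using True by (auto simp: sphere_layer_def)
      finally show ?thesis using True by (simp add: restr_def subset_sum_def)
    qed (simp add: restr_def sum_fun_apply fscale_def gz_def)
  qed
  then show ?thesis
    unfolding U_sp_def
    by (simp, intro fvs.span_sum fvs.span_scale fvs.span_base) (auto simp: sphere_layer_def)
qed

lemma gz_eq_restr_subset_sum:
  assumes "z \<subseteq> {1..n}"
  shows "gz n i z = restr (sphere_layer n i) (subset_sum (card z) (indicator {z}))"
proof
  fix y
  show "gz n i z y = restr (sphere_layer n i) (subset_sum (card z) (indicator {z})) y"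
  proof (cases "y \<in> sphere_layer n i")
    case True
    have "subset_sum (card z) (indicator {z}) y = (if z \<subseteq> y then 1 else 0)"
      unfolding subset_sum_def indicator_def
      using sum.delta[OF finite_subsets_card[OF finite_if_in_sphere_layer[OF True]], of z "\<lambda>_. 1 :: real"]
      by (simp add: of_bool_def if_distrib cong: if_cong)
    then show ?thesis using True by (simp add: gz_def restr_def)
  qed (simp add: gz_def restr_def)
qed

lemma restr_subset_sum_orthogonal_U_sp:
  assumes down: "down_op n t h = 0" and "t \<ge> 1" and g: "g \<in> U_sp n i (t - 1)"
  shows "layer_inner n i (restr (sphere_layer n i) (subset_sum t h)) g = 0"
  using g unfolding U_sp_def layer_inner_eq_inner_on
proof (rule inner_on_span_eq_0[rotated])
  fix g' assume "g' \<in> {gz n i z |z. z \<subseteq> {1..n} \<and> card z \<le> t - 1}"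
  then obtain z where z: "g' = gz n i z" "z \<subseteq> {1..n}" "card z < t" using \<open>t \<ge> 1\<close> by auto
  have "inner_on (sphere_layer n i) (restr (sphere_layer n i) (subset_sum t h)) g'
      = (\<Sum>y\<in>sphere_layer n i. subset_sum t h y * subset_sum (card z) (indicator {z}) y)"
    unfolding z(1) gz_eq_restr_subset_sum[OF z(2)] inner_on_def by (simp add: restr_def)
  also have "\<dots> = 0" by (rule sum_sphere_layer_subset_sum_orthogonal[OF down z(3)])
  finally show "inner_on (sphere_layer n i) (restr (sphere_layer n i) (subset_sum t h)) g' = 0" .
qed

lemma restr_subset_sum_in_V_sp:
  "down_op n t h = 0 \<Longrightarrow> restr (sphere_layer n i) (subset_sum t h) \<in> V_sp n i t"
  using restr_subset_sum_in_U_sp[of n i t h] restr_subset_sum_orthogonal_U_sp[of n t h _ i]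
  by (auto simp: V_sp_def)

lemma V_sp_scale: "f \<in> V_sp n i t \<Longrightarrow> fscale c f \<in> V_sp n i t"
  unfolding V_sp_def U_sp_def layer_inner_eq_inner_on
  by (auto simp: fvs.span_scale inner_on_scale_left)

lemma sphere_layer_supersets:
  assumes w: "w \<subseteq> {1..n}" "card w + 1 = t"
  shows "{y \<in> sphere_layer n t. w \<subseteq> y} = (\<lambda>a. insert a w) ` ({1..n} - w)"
proof (intro equalityI subsetI)
  have fw: "finite w" using w(1) by (rule finite_subset) simp
  fix y assume "y \<in> {y \<in> sphere_layer n t. w \<subseteq> y}"
  then have y: "y \<subseteq> {1..n}" "card y = t" "w \<subseteq> y" by (auto simp: sphere_layer_def)
  then have "card (y - w) = 1" using w fw by (simp add: card_Diff_subset)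
  then obtain a where a: "y - w = {a}" by (auto simp: card_1_singleton_iff)
  then have "y = insert a w" "a \<in> {1..n} - w" using y by blast+
  then show "y \<in> (\<lambda>a. insert a w) ` ({1..n} - w)" by blast
next
  fix y assume "y \<in> (\<lambda>a. insert a w) ` ({1..n} - w)"
  then show "y \<in> {y \<in> sphere_layer n t. w \<subseteq> y}"
    using w by (auto simp: sphere_layer_def finite_subset)
qed

lemma restr_subset_sum_self:
  assumes "h \<in> funs_on (sphere_layer n t)"
  shows "restr (sphere_layer n t) (subset_sum t h) = h"
proof
  fix y
  show "restr (sphere_layer n t) (subset_sum t h) y = h y"
  proof (cases "y \<in> sphere_layer n t")
    case True
    then have "card y = t" by (simp add: sphere_layer_def)
    then show ?thesis
      using True subset_sum_card_self[OF finite_if_in_sphere_layer[OF True], of h]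
      by (simp add: restr_def)
  qed (use assms in \<open>simp add: restr_def funs_on_def\<close>)
qed

lemma harmonic_eq_V_sp: "harmonic n t = V_sp n t t"
proof (intro equalityI subsetI)
  fix h assume "h \<in> harmonic n t"
  then have "h \<in> funs_on (sphere_layer n t)" "down_op n t h = 0"
    by (simp_all add: harmonic_def)
  then show "h \<in> V_sp n t t"
    using restr_subset_sum_in_V_sp[of n t h t] restr_subset_sum_self by simp
next
  fix f assume f: "f \<in> V_sp n t t"
  have "f \<in> U_sp n t t" using f by (cases "t = 0") (auto simp: V_sp_def)
  moreover have "U_sp n t t \<subseteq> funs_on (sphere_layer n t)"
    unfolding U_sp_def by (intro fvs.span_minimal funs_on_subspace) (auto simp: gz_def funs_on_def)
  ultimately have f_on: "f \<in> funs_on (sphere_layer n t)" by blast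
  have "(\<Sum>a\<in>{1..n} - w. f (insert a w)) = 0" if w: "w \<subseteq> {1..n}" "card w + 1 = t" for w
  proof -
    have "gz n t w \<in> U_sp n t (t - 1)"
      unfolding U_sp_def by (rule fvs.span_base) (use w in auto)
    then have "layer_inner n t f (gz n t w) = 0" using f w by (auto simp: V_sp_def)
    moreover have "layer_inner n t f (gz n t w) = sum f {y \<in> sphere_layer n t. w \<subseteq> y}"
      unfolding layer_inner_def gz_def
      by (simp add: sum.inter_filter[OF finite_sphere_layer] if_distrib cong: if_cong)
    moreover have "inj_on (\<lambda>a. insert a w) ({1..n} - w)"
      by (rule inj_onI) (metis DiffD2 insertE insertI1)
    ultimately show ?thesis
      unfolding sphere_layer_supersets[OF w] by (simp add: sum.reindex)
  qed
  then show "f \<in> harmonic n t"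
    using f_on by (simp add: harmonic_def down_op_def fun_eq_iff)
qed

section \<open>Counting dimensions\<close>

lemma sum_bdiff: "(\<Sum>t\<in>{0..r}. bdiff n t) = int (n choose r)"
  by (induction r) (auto simp: bdiff_def)

lemma card_hball_eq_sum_bdiff: "int (card (hball n r)) = (\<Sum>t\<in>{0..r}. int (r - t + 1) * bdiff n t)"
proof (induction r)
  case 0
  then show ?case by (simp add: card_hball bdiff_def)
next
  case (Suc r)
  have "(\<Sum>t\<in>{0..Suc r}. int (Suc r - t + 1) * bdiff n t)
      = (\<Sum>t\<in>{0..r}. int (r - t + 1) * bdiff n t + bdiff n t) + bdiff n (Suc r)"
    by (simp add: Suc_diff_le algebra_simps)
  also have "\<dots> = int (card (hball n r)) + int (n choose Suc r)"
    unfolding sum.distrib Suc.IH sum_bdiff by (simp add: bdiff_def)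
  finally show ?case by (simp add: card_hball)
qed

lemma bdiff_pos:
  assumes "2 * t \<le> n"
  shows "bdiff n t > 0"
proof (cases t)
  case (Suc k)
  have "Suc k * (n choose k) < (n - k) * (n choose k)"
    using assms Suc by (intro mult_less_mono1) simp_all
  also have "\<dots> = Suc k * (n choose Suc k)"
    using binomial_absorption[of k n] binomial_absorb_comp[of n k] by simp
  finally have "n choose k < n choose Suc k" using mult_less_cancel1 by blast
  then show ?thesis using Suc by (simp add: bdiff_def)
qed (simp add: bdiff_def)

definition eigen_family :: "nat \<Rightarrow> nat \<Rightarrow> nat \<Rightarrow> real \<Rightarrow> (nat set \<Rightarrow> real) set" where
  "eigen_family n r t mu = lift n r t mu ` harmonic n t"

lemma eigen_family_subspace: "fvs.subspace (eigen_family n r t mu)"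
proof -
  interpret L: Vector_Spaces.linear fscale fscale "lift n r t mu" by (rule lift_linear)
  show ?thesis unfolding eigen_family_def by (rule L.subspace_image[OF harmonic_subspace])
qed

lemma eigen_family_subset_funs_on: "eigen_family n r t mu \<subseteq> funs_on (hball n r)"
  unfolding eigen_family_def using lift_in_funs_on by blast

lemma eigen_family_subset_adj_eigenspace:
  assumes "2 * r \<le> n" "t \<le> r" "mu \<in> Lambda n r t"
  shows "eigen_family n r t mu \<subseteq> adj_eigenspace n r mu"
  using assms lift_eigen[OF assms(1,2)] lift_in_funs_on Lambda_eq_roots_kraw_poly[OF assms(1,2)]
  unfolding eigen_family_def adj_eigenspace_def harmonic_def by auto

lemma restr_eigen_family:
  assumes "t \<le> r"
  shows "restr (sphere_layer n t) ` eigen_family n r t mu = harmonic n t"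
proof -
  have "restr (sphere_layer n t) ` eigen_family n r t mu = (\<lambda>h. h) ` harmonic n t"
    unfolding eigen_family_def image_image
    using restr_lift_self[OF assms] harmonic_subset_funs_on by (intro image_cong) blast+
  then show ?thesis by simp
qed

lemma dim_eigen_family:
  assumes "t \<le> r"
  shows "fvs.dim (eigen_family n r t mu) = fvs.dim (harmonic n t)"
proof (rule antisym)
  show "fvs.dim (eigen_family n r t mu) \<le> fvs.dim (harmonic n t)"
    unfolding eigen_family_def
    using subset_trans[OF harmonic_subset_funs_on funs_on_subset_span_indicators[OF finite_sphere_layer]]
    by (rule fvs_dim_image_le[OF lift_linear _ finite_imageI[OF finite_sphere_layer]])
  have "fvs.dim (restr (sphere_layer n t) ` eigen_family n r t mu) \<le> fvs.dim (eigen_family n r t mu)"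
    using subset_trans[OF eigen_family_subset_funs_on funs_on_subset_span_indicators[OF finite_hball]]
    by (rule fvs_dim_image_le[OF restr_linear _ finite_imageI[OF finite_hball]])
  then show "fvs.dim (harmonic n t) \<le> fvs.dim (eigen_family n r t mu)"
    unfolding restr_eigen_family[OF assms] .
qed

lemma inner_on_eigen_family:
  assumes "2 * r \<le> n" "(t, mu) \<noteq> (t', mu')"
    and "t \<le> r" "mu \<in> Lambda n r t" "t' \<le> r" "mu' \<in> Lambda n r t'"
    and f: "f \<in> eigen_family n r t mu" and g: "g \<in> eigen_family n r t' mu'"
  shows "inner_on (hball n r) f g = 0"
proof (cases "t = t'")
  case True
  then show ?thesis
    using assms eigen_family_subset_adj_eigenspace[OF assms(1)]
    by (intro inner_on_adj_eigenspaces[of f n r mu g mu']) auto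
next
  case False
  obtain h h' where h: "f = lift n r t mu h" "h \<in> harmonic n t"
    and h': "g = lift n r t' mu' h'" "h' \<in> harmonic n t'"
    using f g unfolding eigen_family_def by blast
  have "down_op n t h = 0" "down_op n t' h' = 0"
    using h(2) h'(2) by (simp_all add: harmonic_def)
  show ?thesis
  proof (cases "t < t'")
    case True
    show ?thesis unfolding h h' by (rule inner_on_lift_orthogonal[OF True]) fact
  next
    case False
    then have "t' < t" using \<open>t \<noteq> t'\<close> by simp
    then have "inner_on (hball n r) g f = 0"
      unfolding h h' by (rule inner_on_lift_orthogonal) fact
    then show ?thesis using inner_on_sym[of "hball n r" g f] by simp
  qed
qed

definition eigen_index :: "nat \<Rightarrow> nat \<Rightarrow> (nat \<times> real) set" where
  "eigen_index n r = Sigma {0..r} (Lambda n r)"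

lemma finite_eigen_index: "2 * r \<le> n \<Longrightarrow> finite (eigen_index n r)"
  unfolding eigen_index_def
  by (intro finite_SigmaI) (auto intro: card_ge_0_finite simp: card_Lambda)

lemma sum_eigen_index:
  fixes g :: "nat \<Rightarrow> int"
  assumes "2 * r \<le> n"
  shows "(\<Sum>p\<in>eigen_index n r. g (fst p)) = (\<Sum>t\<in>{0..r}. int (r - t + 1) * g t)"
proof -
  have "(\<Sum>p\<in>eigen_index n r. g (fst p)) = (\<Sum>t\<in>{0..r}. \<Sum>mu\<in>Lambda n r t. g t)"
    unfolding eigen_index_def
    by (subst sum.Sigma) (auto simp: card_Lambda[OF assms] case_prod_beta intro: card_ge_0_finite)
  also have "\<dots> = (\<Sum>t\<in>{0..r}. int (r - t + 1) * g t)"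
    using assms by (intro sum.cong) (simp_all add: card_Lambda)
  finally show ?thesis .
qed

lemma sum_dim_eigen_family_le_card:
  assumes "2 * r \<le> n"
  shows "(\<Sum>p\<in>eigen_index n r. fvs.dim (eigen_family n r (fst p) (snd p))) \<le> card (hball n r)"
proof (rule sum_dim_orthogonal_family_le_card[OF finite_eigen_index[OF assms] finite_hball])
  fix p q x y
  assume "p \<in> eigen_index n r" "q \<in> eigen_index n r" "p \<noteq> q"
    "x \<in> eigen_family n r (fst p) (snd p)" "y \<in> eigen_family n r (fst q) (snd q)"
  then show "inner_on (hball n r) x y = 0"
    by (intro inner_on_eigen_family[OF assms]) (auto simp: eigen_index_def prod_eq_iff)
qed (simp_all add: eigen_family_subset_funs_on eigen_family_subspace)

lemma dim_harmonic:
  assumes "2 * r \<le> n" "t \<le> r"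
  shows "int (fvs.dim (harmonic n t)) = bdiff n t"
proof -
  let ?d = "\<lambda>t. int (fvs.dim (harmonic n t))"
  let ?w = "\<lambda>t. int (r - t + 1)"
  have "(\<Sum>t\<in>{0..r}. ?w t * ?d t) = (\<Sum>p\<in>eigen_index n r. ?d (fst p))"
    by (rule sum_eigen_index[OF assms(1), symmetric])
  also have "\<dots> = int (\<Sum>p\<in>eigen_index n r. fvs.dim (eigen_family n r (fst p) (snd p)))"
    unfolding of_nat_sum by (intro sum.cong) (auto simp: eigen_index_def dim_eigen_family)
  also have "\<dots> \<le> int (card (hball n r))"
    using sum_dim_eigen_family_le_card[OF assms(1)] by linarith
  finally have "(\<Sum>t\<in>{0..r}. ?w t * (?d t - bdiff n t)) \<le> 0"
    unfolding card_hball_eq_sum_bdiff by (simp add: sum_subtractf right_diff_distrib)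
  moreover have nonneg: "\<forall>t\<in>{0..r}. 0 \<le> ?w t * (?d t - bdiff n t)"
    using dim_harmonic_ge by simp
  ultimately have "(\<Sum>t\<in>{0..r}. ?w t * (?d t - bdiff n t)) = 0"
    using sum_nonneg[of "{0..r}"] by (metis (no_types, lifting) antisym)
  then have "\<forall>t\<in>{0..r}. ?w t * (?d t - bdiff n t) = 0"
    by (subst (asm) sum_nonneg_eq_0_iff) (use nonneg in auto)
  then show ?thesis using assms(2) by simp
qed

lemma dim_eigen_family_eq_bdiff:
  "2 * r \<le> n \<Longrightarrow> t \<le> r \<Longrightarrow> int (fvs.dim (eigen_family n r t mu)) = bdiff n t"
  using dim_eigen_family dim_harmonic by simp

lemma sum_bdiff_le_dim_adj_eigenspace:
  assumes "2 * r \<le> n"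
  shows "(\<Sum>t \<in> {t \<in> {0..r}. mu \<in> Lambda n r t}. bdiff n t) \<le> int (fvs.dim (adj_eigenspace n r mu))"
proof -
  let ?T = "{t \<in> {0..r}. mu \<in> Lambda n r t}"
  let ?E = "adj_eigenspace n r mu"
  have "(\<Sum>t\<in>?T. fvs.dim (eigen_family n r t mu)) \<le> fvs.dim (fvs.span (\<Union>t\<in>?T. eigen_family n r t mu))"
  proof (rule sum_dim_orthogonal_family[OF _ finite_hball])
    fix t t' x y
    assume "t \<in> ?T" "t' \<in> ?T" "t \<noteq> t'" "x \<in> eigen_family n r t mu" "y \<in> eigen_family n r t' mu"
    then show "inner_on (hball n r) x y = 0" by (intro inner_on_eigen_family[OF assms]) auto
  qed (simp_all add: eigen_family_subset_funs_on eigen_family_subspace)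
  also have "\<dots> \<le> fvs.dim ?E"
  proof (rule fvs_dim_mono)
    show "fvs.span (\<Union>t\<in>?T. eigen_family n r t mu) \<subseteq> ?E"
      using eigen_family_subset_adj_eigenspace[OF assms]
      by (intro fvs.span_minimal adj_eigenspace_subspace) auto
    show "?E \<subseteq> fvs.span ((\<lambda>z. indicator {z}) ` hball n r)"
      using funs_on_subset_span_indicators[OF finite_hball] by (auto simp: adj_eigenspace_def)
  qed (simp add: finite_hball)
  finally have "int (\<Sum>t\<in>?T. fvs.dim (eigen_family n r t mu)) \<le> int (fvs.dim ?E)"
    by (simp only: of_nat_le_iff)
  moreover have "(\<Sum>t\<in>?T. bdiff n t) = int (\<Sum>t\<in>?T. fvs.dim (eigen_family n r t mu))"
    unfolding of_nat_sum by (intro sum.cong) (simp_all add: dim_eigen_family_eq_bdiff[OF assms])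
  ultimately show ?thesis by simp
qed

lemma eigen_index_subset_adj_eigenspace:
  assumes "2 * r \<le> n" "p \<in> eigen_index n r"
  shows "eigen_family n r (fst p) (snd p) \<subseteq> adj_eigenspace n r (snd p)"
proof -
  obtain t m where "p = (t, m)" "t \<le> r" "m \<in> Lambda n r t"
    using assms(2) by (auto simp: eigen_index_def)
  then show ?thesis using eigen_family_subset_adj_eigenspace[OF assms(1)] by simp
qed

lemma sum_eigen_index_split:
  assumes "2 * r \<le> n"
  shows "(\<Sum>p\<in>eigen_index n r. g (fst p))
    = (\<Sum>p\<in>{p \<in> eigen_index n r. snd p \<noteq> mu}. g (fst p)) + (\<Sum>t \<in> {t \<in> {0..r}. mu \<in> Lambda n r t}. g t)"
proof -
  let ?T = "{t \<in> {0..r}. mu \<in> Lambda n r t}"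
  have split: "{p \<in> eigen_index n r. snd p \<noteq> mu} \<union> (\<lambda>t. (t, mu)) ` ?T = eigen_index n r"
    by (auto simp: eigen_index_def)
  have "(\<Sum>p\<in>{p \<in> eigen_index n r. snd p \<noteq> mu} \<union> (\<lambda>t. (t, mu)) ` ?T. g (fst p))
      = (\<Sum>p\<in>{p \<in> eigen_index n r. snd p \<noteq> mu}. g (fst p)) + (\<Sum>p\<in>(\<lambda>t. (t, mu)) ` ?T. g (fst p))"
    using finite_eigen_index[OF assms] by (intro sum.union_disjoint) auto
  also have "(\<Sum>p\<in>(\<lambda>t. (t, mu)) ` ?T. g (fst p)) = (\<Sum>t\<in>?T. g t)"
    by (simp add: sum.reindex inj_on_def)
  finally show ?thesis unfolding split .
qed

(* The eigenspace for mu and the eigen families for all other eigenvalues are mutually orthogonal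
   subspaces of the functions on the ball. *)
lemma dim_adj_eigenspace_add_sum_dim_le_card:
  assumes "2 * r \<le> n"
  shows "fvs.dim (adj_eigenspace n r mu)
    + (\<Sum>p\<in>{p \<in> eigen_index n r. snd p \<noteq> mu}. fvs.dim (eigen_family n r (fst p) (snd p)))
    \<le> card (hball n r)"
proof -
  let ?E = "adj_eigenspace n r mu"
  let ?I' = "{p \<in> eigen_index n r. snd p \<noteq> mu}"
  let ?W = "\<lambda>p. eigen_family n r (fst p) (snd p)"
  define X where "X = case_option ?E ?W"
  have fin: "finite ?I'" using finite_eigen_index[OF assms] by simp
  have E_orth: "inner_on (hball n r) x y = 0" if x: "x \<in> ?E" and p: "p \<in> ?I'" and y: "y \<in> ?W p"
    for x y p
  proof (rule inner_on_adj_eigenspaces[OF x])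
    show "y \<in> adj_eigenspace n r (snd p)" using eigen_index_subset_adj_eigenspace[OF assms] p y by blast
    show "mu \<noteq> snd p" using p by simp
  qed
  have "(\<Sum>q\<in>insert None (Some ` ?I'). fvs.dim (X q)) \<le> card (hball n r)"
  proof (rule sum_dim_orthogonal_family_le_card)
    fix q
    show "X q \<subseteq> funs_on (hball n r)"
      by (cases q) (auto simp: X_def adj_eigenspace_def eigen_family_subset_funs_on)
    show "fvs.subspace (X q)"
      by (cases q) (simp_all add: X_def adj_eigenspace_subspace eigen_family_subspace)
  next
    fix q q' x y
    assume q: "q \<in> insert None (Some ` ?I')" and q': "q' \<in> insert None (Some ` ?I')"
      and "q \<noteq> q'" and x: "x \<in> X q" and y: "y \<in> X q'"
    show "inner_on (hball n r) x y = 0"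
    proof (cases q)
      case None
      then obtain p where "q' = Some p" "p \<in> ?I'" using q' \<open>q \<noteq> q'\<close> by auto
      then show ?thesis using E_orth x y None by (simp add: X_def)
    next
      case (Some p)
      then have p: "p \<in> ?I'" using q by auto
      show ?thesis
      proof (cases q')
        case None
        then have "inner_on (hball n r) y x = 0" using E_orth y x Some p by (simp add: X_def)
        then show ?thesis using inner_on_sym[of "hball n r" x y] by simp
      next
        case (Some p')
        then have "p' \<in> ?I'" "p \<noteq> p'" using q' \<open>q \<noteq> q'\<close> \<open>q = Some p\<close> by auto
        then show ?thesis
          using x y \<open>q = Some p\<close> Some p
            inner_on_eigen_family[OF assms, of "fst p" "snd p" "fst p'" "snd p'"]
          by (auto simp: X_def eigen_index_def prod_eq_iff)
      qed
    qed
  qed (use fin finite_hball in simp_all)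
  also have "(\<Sum>q\<in>insert None (Some ` ?I'). fvs.dim (X q)) = fvs.dim ?E + (\<Sum>p\<in>?I'. fvs.dim (?W p))"
    using fin by (simp add: X_def sum.reindex)
  finally show ?thesis .
qed

lemma dim_adj_eigenspace_le_sum_bdiff:
  assumes "2 * r \<le> n"
  shows "int (fvs.dim (adj_eigenspace n r mu)) \<le> (\<Sum>t \<in> {t \<in> {0..r}. mu \<in> Lambda n r t}. bdiff n t)"
proof -
  let ?I' = "{p \<in> eigen_index n r. snd p \<noteq> mu}"
  have "int (fvs.dim (adj_eigenspace n r mu)
      + (\<Sum>p\<in>?I'. fvs.dim (eigen_family n r (fst p) (snd p)))) \<le> int (card (hball n r))"
    using dim_adj_eigenspace_add_sum_dim_le_card[OF assms] by (simp only: of_nat_le_iff)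
  moreover have "(\<Sum>p\<in>?I'. bdiff n (fst p)) = int (\<Sum>p\<in>?I'. fvs.dim (eigen_family n r (fst p) (snd p)))"
    unfolding of_nat_sum
    by (intro sum.cong) (auto simp: eigen_index_def dim_eigen_family_eq_bdiff[OF assms])
  moreover have "int (card (hball n r))
      = (\<Sum>p\<in>?I'. bdiff n (fst p)) + (\<Sum>t \<in> {t \<in> {0..r}. mu \<in> Lambda n r t}. bdiff n t)"
    unfolding card_hball_eq_sum_bdiff sum_eigen_index[OF assms, symmetric]
    by (rule sum_eigen_index_split[OF assms])
  ultimately show ?thesis by simp
qed

lemma dim_adj_eigenspace:
  "2 * r \<le> n \<Longrightarrow>
    int (fvs.dim (adj_eigenspace n r mu)) = (\<Sum>t \<in> {t \<in> {0..r}. mu \<in> Lambda n r t}. bdiff n t)"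
  using sum_bdiff_le_dim_adj_eigenspace dim_adj_eigenspace_le_sum_bdiff by (meson antisym)

lemma is_adj_eigenvalue_iff:
  assumes "2 * r \<le> n"
  shows "is_adj_eigenvalue n r mu \<longleftrightarrow> (\<exists>t \<in> {0..r}. mu \<in> Lambda n r t)"
proof
  assume "is_adj_eigenvalue n r mu"
  then have "\<not> adj_eigenspace n r mu \<subseteq> {0}" by (auto simp: is_adj_eigenvalue_def)
  moreover have "adj_eigenspace n r mu \<subseteq> fvs.span ((\<lambda>z. indicator {z}) ` hball n r)"
    using funs_on_subset_span_indicators[OF finite_hball] by (auto simp: adj_eigenspace_def)
  ultimately have "fvs.dim (adj_eigenspace n r mu) \<noteq> 0"
    using fvs_dim_eq_0 finite_hball by blast
  then show "\<exists>t \<in> {0..r}. mu \<in> Lambda n r t"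
    using dim_adj_eigenspace[OF assms, of mu] by (metis (no_types, lifting) empty_Collect_eq
      of_nat_eq_0_iff sum.empty)
next
  assume "\<exists>t \<in> {0..r}. mu \<in> Lambda n r t"
  then obtain t where t: "t \<le> r" "mu \<in> Lambda n r t" by auto
  have "0 < int (fvs.dim (eigen_family n r t mu))"
    using dim_eigen_family_eq_bdiff[OF assms t(1)] bdiff_pos[of t n] assms t(1) by simp
  then have "fvs.dim (eigen_family n r t mu) \<noteq> 0" by simp
  then have "\<not> eigen_family n r t mu \<subseteq> {0}"
    using fvs.dim_le_card[of "eigen_family n r t mu" "{}"] by auto
  then show "is_adj_eigenvalue n r mu"
    using eigen_family_subset_adj_eigenspace[OF assms t] unfolding is_adj_eigenvalue_def by blast
qed

lemma eigen_family_vanishes_below: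
  "f \<in> eigen_family n r t mu \<Longrightarrow> x \<subseteq> {1..n} \<Longrightarrow> card x < t \<Longrightarrow> f x = 0"
  unfolding eigen_family_def using lift_eq_0_below by blast

lemma restr_eigen_family_in_V_sp:
  assumes "f \<in> eigen_family n r t mu" "t \<le> i" "i \<le> r"
  shows "restr (sphere_layer n i) f \<in> V_sp n i t"
proof -
  obtain h where "f = lift n r t mu h" "down_op n t h = 0"
    using assms(1) unfolding eigen_family_def harmonic_def by blast
  then show ?thesis
    using restr_lift_sphere_layer[OF assms(2,3)] V_sp_scale restr_subset_sum_in_V_sp by simp
qed

lemma span_restr_eigen_family:
  "t \<le> r \<Longrightarrow> fvs.span (restr (sphere_layer n t) ` eigen_family n r t mu) = V_sp n t t"
  using restr_eigen_family harmonic_subspace harmonic_eq_V_sp by simp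

lemma inj_on_restr_eigen_family:
  assumes "t \<le> r"
  shows "inj_on (restr (sphere_layer n t)) (eigen_family n r t mu)"
proof (rule inj_onI)
  fix f g assume "f \<in> eigen_family n r t mu" "g \<in> eigen_family n r t mu"
    and eq: "restr (sphere_layer n t) f = restr (sphere_layer n t) g"
  then obtain h h' where "f = lift n r t mu h" "g = lift n r t mu h'"
    "h \<in> funs_on (sphere_layer n t)" "h' \<in> funs_on (sphere_layer n t)"
    unfolding eigen_family_def harmonic_def by blast
  then show "f = g" using eq restr_lift_self[OF assms] by metis
qed

theorem theorem1p7:
  fixes n r :: nat
  assumes "2 * r \<le> n"
  shows "\<exists>W :: nat \<Rightarrow> real \<Rightarrow> (nat set \<Rightarrow> real) set.
    \<comment> \<open>(1)\<close>
    (\<forall>t \<in> {0..r}. card (Lambda n r t) = r - t + 1 \<and>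
       (\<forall>mu \<in> Lambda n r t.
          fvs.subspace (W t mu) \<and> W t mu \<subseteq> adj_eigenspace n r mu \<and>
          int (fvs.dim (W t mu)) = bdiff n t)) \<and>
    \<comment> \<open>(2)\<close>
    (\<forall>mu::real. is_adj_eigenvalue n r mu \<longleftrightarrow> (\<exists>t \<in> {0..r}. mu \<in> Lambda n r t)) \<and>
    (\<forall>mu::real. is_adj_eigenvalue n r mu \<longrightarrow>
       int (fvs.dim (adj_eigenspace n r mu)) = (\<Sum>t \<in> {t \<in> {0..r}. mu \<in> Lambda n r t}. bdiff n t)) \<and>
    \<comment> \<open>(3)\<close>
    (\<forall>t \<in> {0..r}. \<forall>mu \<in> Lambda n r t.
       (\<forall>f \<in> W t mu.
          (\<forall>x. x \<subseteq> {1..n} \<and> card x < t \<longrightarrow> f x = 0) \<and>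
          (\<forall>i. t \<le> i \<and> i \<le> r \<longrightarrow> restr (sphere_layer n i) f \<in> V_sp n i t)) \<and>
       fvs.span (restr (sphere_layer n t) ` W t mu) = V_sp n t t \<and>
       inj_on (restr (sphere_layer n t)) (W t mu))"
proof (intro exI[of _ "eigen_family n r"] conjI ballI allI impI)
  fix t mu assume "t \<in> {0..r}"
  then have t: "t \<le> r" by simp
  show "card (Lambda n r t) = r - t + 1" by (rule card_Lambda[OF assms t])
  show "fvs.subspace (eigen_family n r t mu)" by (rule eigen_family_subspace)
  show "int (fvs.dim (eigen_family n r t mu)) = bdiff n t" by (rule dim_eigen_family_eq_bdiff[OF assms t])
  show "fvs.span (restr (sphere_layer n t) ` eigen_family n r t mu) = V_sp n t t"
    by (rule span_restr_eigen_family[OF t])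
  show "inj_on (restr (sphere_layer n t)) (eigen_family n r t mu)"
    by (rule inj_on_restr_eigen_family[OF t])
  assume "mu \<in> Lambda n r t"
  then show "eigen_family n r t mu \<subseteq> adj_eigenspace n r mu"
    by (rule eigen_family_subset_adj_eigenspace[OF assms t])
next
  fix t mu f x assume "f \<in> eigen_family n r t mu" "x \<subseteq> {1..n} \<and> card x < t"
  then show "f x = 0" using eigen_family_vanishes_below by blast
next
  fix t mu f i assume "f \<in> eigen_family n r t mu" "t \<le> i \<and> i \<le> r"
  then show "restr (sphere_layer n i) f \<in> V_sp n i t" using restr_eigen_family_in_V_sp by blast
qed (use is_adj_eigenvalue_iff[OF assms] dim_adj_eigenspace[OF assms] in auto)

end
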